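(* Let $\rho>0$, let $A\colon[0,\infty)\to\mathbb R^{n\times n}$ and $f\colon[0,\infty)\times\mathbb R^n\to\mathbb R^n$ be continuous, and suppose that $x'=A(t)x$ has an exponential dichotomy on $[0,\infty)$ with constants $N,\lambda>0$. Suppose there exists $L>0$ such that $|f(t,x)|\le L|x|$ for all $t\ge0$ and $x\in B_\rho(0)$, and that $L<\lambda/(2N)$. Then there exists $\varepsilon>0$ such that if $y$ is a pseudosolution of $x'=A(t)x+f(t,x)$ on $[0,\tau)$ for some $\tau\in(0,\infty]$ with $\sigma_y\le\varepsilon$, then this equation has a pseudosolution $z$ on $[0,\tau)$ with $z(t)\in B_\rho(0)$ for all $t\in[0,\tau)$ and $e_z(t)=e_y(t)$ for all $t\in[0,\tau)$.
   Context: $|\cdot|$ is a fixed norm on $\mathbb R^n$ and the induced matrix norm; $B_r(x)=\{y:|y-x|\le r\}$. For continuous $g\colon[0,\infty)\times\mathbb R^n\to\mathbb R^n$ and $\tau\in(0,\infty]$, a pseudosolution of $x'=g(t,x)$ on $[0,\tau)$ is a $C^1$ map $y\colon[0,\tau)\to\mathbb R^n$ with $\sigma_y:=\sup_{0\le t<\tau}|y'(t)-g(t,y(t))|<\infty$; its error function is $e_y(t):=|y'(t)-g(t,y(t))|$, $t\in[0,\tau)$. Here $g(t,x)=A(t)x+f(t,x)$. With $T(t,s)$ the transition matrix of $x'=A(t)x$: an exponential dichotomy on $[0,\infty)$ consists of projections $P(t)$ and constants $N,\lambda>0$ with $P(t)T(t,s)=T(t,s)P(s)$ for all $t,s\ge0$,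 $|T(t,s)P(s)|\le Ne^{-\lambda(t-s)}$ for $t\ge s\ge0$, and $|T(t,s)(I-P(s))|\le Ne^{-\lambda(s-t)}$ for $0\le t\le s$. *)

theory Defs
  imports "HOL-Analysis.Analysis"
begin

definition is_norm :: "(real^'n \<Rightarrow> real) \<Rightarrow> bool" where
  "is_norm nrm \<longleftrightarrow>
     (\<forall>x. 0 \<le> nrm x) \<and> (\<forall>x. nrm x = 0 \<longleftrightarrow> x = 0) \<and>
     (\<forall>c x. nrm (c *\<^sub>R x) = \<bar>c\<bar> * nrm x) \<and>
     (\<forall>x y. nrm (x + y) \<le> nrm x + nrm y)"

definition mnorm :: "(real^'n \<Rightarrow> real) \<Rightarrow> real^'n^'n \<Rightarrow> real" where
  "mnorm nrm M = Sup {nrm (M *v x) | x. nrm x = 1}"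

definition Ivl :: "ereal \<Rightarrow> real set" where
  "Ivl \<tau> = {t. 0 \<le> t \<and> ereal t < \<tau>}"

definition err_fun :: "(real^'n \<Rightarrow> real) \<Rightarrow> (real \<Rightarrow> real^'n \<Rightarrow> real^'n) \<Rightarrow> ereal
    \<Rightarrow> (real \<Rightarrow> real^'n) \<Rightarrow> real \<Rightarrow> real" where
  "err_fun nrm g \<tau> y t = nrm (vector_derivative y (at t within Ivl \<tau>) - g t (y t))"

definition sigma :: "(real^'n \<Rightarrow> real) \<Rightarrow> (real \<Rightarrow> real^'n \<Rightarrow> real^'n) \<Rightarrow> ereal
    \<Rightarrow> (real \<Rightarrow> real^'n) \<Rightarrow> real" where
  "sigma nrm g \<tau> y = (SUP t\<in>Ivl \<tau>. err_fun nrm g \<tau> y t)"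

definition pseudosolution :: "(real^'n \<Rightarrow> real) \<Rightarrow> (real \<Rightarrow> real^'n \<Rightarrow> real^'n) \<Rightarrow> ereal
    \<Rightarrow> (real \<Rightarrow> real^'n) \<Rightarrow> bool" where
  "pseudosolution nrm g \<tau> y \<longleftrightarrow>
     (\<forall>t\<in>Ivl \<tau>. y differentiable (at t within Ivl \<tau>)) \<and>
     continuous_on (Ivl \<tau>) (\<lambda>t. vector_derivative y (at t within Ivl \<tau>)) \<and>
     bdd_above (err_fun nrm g \<tau> y ` Ivl \<tau>)"

definition transition_matrix :: "(real \<Rightarrow> real^'n^'n) \<Rightarrow> (real \<Rightarrow> real \<Rightarrow> real^'n^'n) \<Rightarrow> bool" where
  "transition_matrix A T \<longleftrightarrow>
     (\<forall>s\<ge>0. T s s = mat 1 \<and>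
        (\<forall>t\<ge>0. ((\<lambda>u. T u s) has_vector_derivative (A t ** T t s)) (at t within {0..})))"

definition exp_dichotomy :: "(real^'n \<Rightarrow> real) \<Rightarrow> (real \<Rightarrow> real^'n^'n) \<Rightarrow>
    (real \<Rightarrow> real^'n^'n) \<Rightarrow> real \<Rightarrow> real \<Rightarrow> bool" where
  "exp_dichotomy nrm A P N lam \<longleftrightarrow> N > 0 \<and> lam > 0 \<and>
     (\<exists>T. transition_matrix A T \<and>
       (\<forall>t\<ge>0. P t ** P t = P t) \<and>
       (\<forall>t\<ge>0. \<forall>s\<ge>0. P t ** T t s = T t s ** P s) \<and>
       (\<forall>t s. 0 \<le> s \<and> s \<le> t \<longrightarrow> mnorm nrm (T t s ** P s) \<le> N * exp (- lam * (t - s))) \<and>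
       (\<forall>t s. 0 \<le> t \<and> t \<le> s \<longrightarrow> mnorm nrm (T t s ** (mat 1 - P s)) \<le> N * exp (- lam * (s - t))))"

end

theory Submission
  imports Defs "HOL-Complex_Analysis.Great_Picard"
begin

text \<open>Only the error function of \<open>y\<close> enters the conclusion, so it suffices to solve
  \<open>x' = A(t) x + f(t, x) + e\<^sub>y(t) u\<close> for a fixed unit vector \<open>u\<close> inside \<open>B\<^sub>\<rho>(0)\<close>: such a solution
  has error function exactly \<open>e\<^sub>y\<close>. After truncating \<open>f\<close> radially outside \<open>B\<^sub>\<rho>(0)\<close> the forcing is
  continuous and bounded by \<open>B = L \<rho> + \<epsilon>\<close>, and the exponential dichotomy gives, through the Green
  kernel, solutions on \<open>[0, b]\<close> of norm at most \<open>2 N B / \<lambda>\<close> independently of \<open>b\<close>; for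
  \<open>\<epsilon> = \<rho> (\<lambda> / (2 N) - L)\<close> this bound is \<open>\<rho>\<close>, so the truncation is inactive. As \<open>f\<close> is only
  continuous, these solutions are limits of Tonelli's delayed approximations, whose unstable initial
  component is fixed by Brouwer's theorem, obtained by Arzela-Ascoli and a diagonal argument over an
  exhaustion of \<open>[0, \<tau>)\<close>.\<close>

section \<open>Norms on \<open>\<real>\<^sup>n\<close>\<close>

locale vector_norm =
  fixes nrm :: "real^'n \<Rightarrow> real"
  assumes is_norm: "is_norm nrm"
begin

lemma nrm_nonneg: "0 \<le> nrm x"
  and nrm_eq_0_iff: "nrm x = 0 \<longleftrightarrow> x = 0"
  and nrm_scaleR: "nrm (c *\<^sub>R x) = \<bar>c\<bar> * nrm x"
  and nrm_triangle: "nrm (x + y) \<le> nrm x + nrm y"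
  using is_norm unfolding is_norm_def by auto

lemma nrm_0 [simp]: "nrm 0 = 0"
  using nrm_eq_0_iff by blast

lemma nrm_minus [simp]: "nrm (- x) = nrm x"
  using nrm_scaleR[of "-1" x] by simp

lemma nrm_pos: "x \<noteq> 0 \<Longrightarrow> 0 < nrm x"
  using nrm_nonneg[of x] nrm_eq_0_iff[of x] by linarith

lemma nrm_normalize: "x \<noteq> 0 \<Longrightarrow> nrm ((1 / nrm x) *\<^sub>R x) = 1"
  using nrm_pos[of x] by (simp add: nrm_scaleR)

lemma nrm_triangle_diff: "nrm x - nrm y \<le> nrm (x - y)"
  using nrm_triangle[of "x - y" y] by simp

lemma nrm_convex_combination:
  "0 \<le> u \<Longrightarrow> 0 \<le> v \<Longrightarrow> nrm (u *\<^sub>R x + v *\<^sub>R y) \<le> u * nrm x + v * nrm y"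
  using nrm_triangle[of "u *\<^sub>R x" "v *\<^sub>R y"] by (simp add: nrm_scaleR)

lemma nrm_sum_le: "nrm (sum f S) \<le> (\<Sum>i\<in>S. nrm (f i))"
proof (induction S rule: infinite_finite_induct)
  case (insert x F)
  then show ?case using nrm_triangle[of "f x" "sum f F"] by simp
qed simp_all

lemma nrm_le_norm:
  obtains C where "C > 0" "\<And>x. nrm x \<le> C * norm x"
proof
  let ?C = "1 + (\<Sum>b\<in>Basis. nrm (b::real^'n))"
  show "?C > 0"
    by (simp add: add_pos_nonneg sum_nonneg nrm_nonneg)
  fix x :: "real^'n"
  have "nrm x = nrm (\<Sum>b\<in>Basis. (x \<bullet> b) *\<^sub>R b)"
    by (simp only: euclidean_representation)
  also have "\<dots> \<le> (\<Sum>b\<in>Basis. \<bar>x \<bullet> b\<bar> * nrm b)"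
    using nrm_sum_le[of "\<lambda>b. (x \<bullet> b) *\<^sub>R b" Basis] by (simp add: nrm_scaleR)
  also have "\<dots> \<le> (\<Sum>b\<in>Basis. norm x * nrm b)"
    by (intro sum_mono mult_right_mono) (auto simp: Basis_le_norm nrm_nonneg)
  also have "\<dots> \<le> ?C * norm x"
    by (simp add: sum_distrib_left algebra_simps)
  finally show "nrm x \<le> ?C * norm x" .
qed

lemma continuous_on_nrm: "continuous_on S nrm"
proof -
  obtain C where C: "C > 0" "\<And>x. nrm x \<le> C * norm x"
    using nrm_le_norm by blast
  have "C-lipschitz_on S nrm"
  proof (rule lipschitz_onI)
    show "dist (nrm x) (nrm y) \<le> C * dist x y" for x y
      using nrm_triangle_diff[of x y] nrm_triangle_diff[of y x] C(2)[of "x - y"] C(2)[of "y - x"]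
      by (simp add: dist_norm norm_minus_commute)
  qed (use C in simp)
  then show ?thesis
    by (rule lipschitz_on_continuous_on)
qed

lemma norm_le_nrm:
  obtains D where "D > 0" "\<And>x. norm x \<le> D * nrm x"
proof -
  obtain b :: "real^'n" where "b \<in> Basis"
    using nonempty_Basis by blast
  then have "sphere (0::real^'n) 1 \<noteq> {}"
    by (metis mem_sphere_0 norm_Basis empty_iff)
  then obtain u where u: "u \<in> sphere 0 1" and min: "\<And>x. x \<in> sphere 0 1 \<Longrightarrow> nrm u \<le> nrm x"
    using continuous_attains_inf[OF compact_sphere _ continuous_on_nrm] by blast
  have u0: "nrm u > 0"
    using u by (intro nrm_pos) auto
  show ?thesis
  proof
    show "1 / nrm u > 0"
      using u0 by simp
    show "norm x \<le> 1 / nrm u * nrm x" for x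
    proof (cases "x = 0")
      case False
      then have "nrm u \<le> nrm ((1 / norm x) *\<^sub>R x)"
        by (intro min) simp
      then show ?thesis
        using False u0 by (simp add: nrm_scaleR field_simps)
    qed simp
  qed
qed

lemma unit_vector_exists: obtains u where "nrm u = 1"
proof -
  have "(1 :: real^'n) \<noteq> 0"
    by (simp add: vec_eq_iff)
  then show ?thesis
    using nrm_normalize that by blast
qed

lemma compact_nrm_ball: "compact {x. nrm x \<le> r}"
proof -
  obtain D where D: "D > 0" "\<And>x. norm x \<le> D * nrm x"
    using norm_le_nrm by blast
  have "bounded {x. nrm x \<le> r}"
    unfolding bounded_iff using D by (metis mem_Collect_eq mult_left_mono order.trans less_imp_le)
  moreover have "closed {x. nrm x \<le> r}"
    by (rule closed_Collect_le[OF continuous_on_nrm continuous_on_const])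
  ultimately show ?thesis
    by (simp add: compact_eq_bounded_closed)
qed

lemma convex_nrm_ball: "convex {x. nrm x \<le> r}"
  by (rule convexI) (auto intro: order.trans[OF nrm_convex_combination] convex_bound_le)

lemma convex_nrm_open_ball: "convex {x. nrm x < r}"
  by (rule convexI) (auto intro: le_less_trans[OF nrm_convex_combination] convex_bound_lt)

lemma supporting_functional:
  obtains a where "\<And>x. a \<bullet> x \<le> nrm x" "a \<bullet> v = nrm v"
proof (cases "v = 0")
  case True
  then show ?thesis
    using that[of 0] nrm_nonneg by simp
next
  case False
  define u where "u = (1 / nrm v) *\<^sub>R v"
  have nu: "nrm u = 1"
    unfolding u_def using False by (rule nrm_normalize)
  obtain a c where a: "a \<noteq> 0" and below: "\<And>x. nrm x < 1 \<Longrightarrow> a \<bullet> x \<le> c" and above: "c \<le> a \<bullet> u"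
    using separating_hyperplane_sets[OF convex_nrm_open_ball convex_singleton, of 1 u] nu
    by (force simp: nrm_0)
  have c0: "0 \<le> c"
    using below[of 0] by simp
  have bound: "a \<bullet> x \<le> c * nrm x" for x
  proof (cases "x = 0")
    case False
    show ?thesis
    proof (rule field_le_mult_one_interval)
      fix t :: real assume t: "0 < t" "t < 1"
      have "nrm ((t / nrm x) *\<^sub>R x) < 1"
        using t nrm_pos[OF False] by (simp add: nrm_scaleR)
      then have "a \<bullet> ((t / nrm x) *\<^sub>R x) \<le> c"
        by (rule below)
      then show "t * (a \<bullet> x) \<le> c * nrm x"
        using nrm_pos[OF False] by (simp add: field_simps)
    qed
  qed (simp add: c0)
  have c: "c > 0"
  proof (rule ccontr)
    assume "\<not> c > 0"
    then have "a \<bullet> a \<le> 0"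
      using bound[of a] c0 by simp
    then show False
      using a inner_gt_zero_iff[of a] by linarith
  qed
  have au: "a \<bullet> u = c"
    using above bound[of u] nu by simp
  show ?thesis
  proof (rule that[of "(1 / c) *\<^sub>R a"])
    show "(1 / c) *\<^sub>R a \<bullet> x \<le> nrm x" for x
      using bound[of x] c by (simp add: field_simps)
    show "(1 / c) *\<^sub>R a \<bullet> v = nrm v"
      using au c nrm_pos[OF False] unfolding u_def by (simp add: field_simps)
  qed
qed

lemma has_integral_nrm_le:
  assumes g: "(g has_integral I) S" and \<beta>: "(\<beta> has_integral K) S"
    and le: "\<And>s. s \<in> S \<Longrightarrow> nrm (g s) \<le> \<beta> s"
  shows "nrm I \<le> K"
proof -
  obtain a where a: "\<And>x. a \<bullet> x \<le> nrm x" "a \<bullet> I = nrm I"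
    using supporting_functional by blast
  have "((\<lambda>s. a \<bullet> g s) has_integral a \<bullet> I) S"
    using has_integral_linear[OF g bounded_linear_inner_right[of a]] by (simp add: o_def)
  then have "a \<bullet> I \<le> K"
    by (rule has_integral_le[OF _ \<beta>]) (use a(1) le in \<open>blast intro: order.trans\<close>)
  then show ?thesis
    using a(2) by simp
qed

lemma mnorm_mult_le: "nrm (M *v x) \<le> mnorm nrm M * nrm x"
proof (cases "x = 0")
  case False
  obtain C where C: "C > 0" "\<And>x. nrm x \<le> C * norm x"
    using nrm_le_norm by blast
  obtain D where D: "D > 0" "\<And>x. norm x \<le> D * nrm x"
    using norm_le_nrm by blast
  obtain K where K: "K > 0" "\<And>x. norm (M *v x) \<le> norm x * K"
    using bounded_linear.pos_bounded[OF matrix_vector_mul_bounded_linear[of M]] by blast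
  have bdd: "bdd_above {nrm (M *v x) | x. nrm x = 1}"
  proof (rule bdd_aboveI)
    fix r assume "r \<in> {nrm (M *v x) | x. nrm x = 1}"
    then obtain x where x: "r = nrm (M *v x)" "nrm x = 1"
      by blast
    have "r \<le> C * (norm x * K)"
      using x(1) C K(2)[of x] by (meson mult_left_mono less_imp_le order.trans)
    also have "\<dots> \<le> C * (D * K)"
      using D(2)[of x] x(2) C K by (simp add: mult_left_mono mult_right_mono)
    finally show "r \<le> C * (D * K)" .
  qed
  have "nrm (M *v ((1 / nrm x) *\<^sub>R x)) \<le> mnorm nrm M"
    unfolding mnorm_def using nrm_normalize[OF False] by (intro cSup_upper[OF _ bdd]) blast
  then show ?thesis
    using nrm_pos[OF False] by (simp add: matrix_vector_mult_scaleR nrm_scaleR field_simps)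
qed simp

lemma radial_retraction:
  assumes "\<rho> > 0"
  obtains r where "continuous_on UNIV r" "\<And>x. nrm (r x) \<le> \<rho>" "\<And>x. nrm x \<le> \<rho> \<Longrightarrow> r x = x"
proof
  let ?r = "\<lambda>x. (\<rho> / max \<rho> (nrm x)) *\<^sub>R x"
  have pos: "max \<rho> (nrm x) > 0" for x
    using assms by simp
  show "continuous_on UNIV ?r"
    using pos by (intro continuous_intros continuous_on_nrm) (auto simp: less_imp_neq[symmetric])
  show "nrm (?r x) \<le> \<rho>" for x
    using assms pos[of x] nrm_nonneg[of x] by (simp add: nrm_scaleR divide_le_eq mult_left_mono)
  show "?r x = x" if "nrm x \<le> \<rho>" for x
    using that assms by simp
qed

end

lemma bounded_bilinear_matrix_matrix_mult:
  "bounded_bilinear ((**) :: real^'n^'m \<Rightarrow> real^'p^'n \<Rightarrow> real^'p^'m)"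
  unfolding bilinear_conv_bounded_bilinear[symmetric] bilinear_def linear_iff
  by (simp add: matrix_add_ldistrib matrix_scalar_ac scalar_matrix_assoc vec_eq_iff
      matrix_matrix_mult_def sum.distrib sum_distrib_left algebra_simps)

lemma bounded_bilinear_matrix_vector_mult:
  "bounded_bilinear ((*v) :: real^'n^'m \<Rightarrow> real^'n \<Rightarrow> real^'m)"
  unfolding bilinear_conv_bounded_bilinear[symmetric] bilinear_def linear_iff
  by (simp add: matrix_vector_mult_add_rdistrib matrix_vector_right_distrib
      scaleR_matrix_vector_assoc matrix_vector_mult_scaleR)

lemma continuous_on_matrix_vector_mult [continuous_intros]:
  fixes M :: "'a::topological_space \<Rightarrow> real^'n^'m"
  shows "continuous_on S M \<Longrightarrow> continuous_on S v \<Longrightarrow> continuous_on S (\<lambda>s. M s *v v s)"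
  by (rule bounded_bilinear.continuous_on[OF bounded_bilinear_matrix_vector_mult])

lemma tendsto_matrix_vector_mult [tendsto_intros]:
  fixes M :: "'a \<Rightarrow> real^'n^'m"
  shows "(M \<longlongrightarrow> M0) F \<Longrightarrow> (v \<longlongrightarrow> v0) F \<Longrightarrow> ((\<lambda>s. M s *v v s) \<longlongrightarrow> M0 *v v0) F"
  by (rule bounded_bilinear.tendsto[OF bounded_bilinear_matrix_vector_mult])

lemma continuous_on_matrix_matrix_mult [continuous_intros]:
  fixes M :: "'a::topological_space \<Rightarrow> real^'n^'m"
  shows "continuous_on S M \<Longrightarrow> continuous_on S M' \<Longrightarrow> continuous_on S (\<lambda>s. M s ** M' s)"
  by (rule bounded_bilinear.continuous_on[OF bounded_bilinear_matrix_matrix_mult])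

lemmas matrix_diff_ldistrib = bounded_bilinear.diff_right[OF bounded_bilinear_matrix_matrix_mult]
lemmas matrix_diff_rdistrib = bounded_bilinear.diff_left[OF bounded_bilinear_matrix_matrix_mult]


lemma has_real_derivative_inner_self:
  fixes X :: "real \<Rightarrow> 'a::real_inner"
  assumes "(X has_vector_derivative V) (at t within S)"
  shows "((\<lambda>t. X t \<bullet> X t) has_real_derivative 2 * (X t \<bullet> V)) (at t within S)"
proof -
  have "((\<lambda>t. X t \<bullet> X t) has_derivative (\<lambda>h. X t \<bullet> (h *\<^sub>R V) + (h *\<^sub>R V) \<bullet> X t)) (at t within S)"
    using assms unfolding has_vector_derivative_def by (intro has_derivative_inner)
  then show ?thesis
    unfolding has_field_derivative_def
    by (rule has_derivative_eq_rhs) (auto simp: fun_eq_iff inner_commute algebra_simps)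
qed

lemma has_integral_exp_forward:
  fixes lam :: real
  assumes "a \<le> t" "lam > 0"
  shows "((\<lambda>s. exp (- lam * (t - s))) has_integral (1 - exp (- lam * (t - a))) / lam) {a..t}"
proof -
  have "((\<lambda>s. exp (- lam * (t - s))) has_integral exp (- lam * (t - t)) / lam - exp (- lam * (t - a)) / lam) {a..t}"
    using assms
    by (intro fundamental_theorem_of_calculus)
      (auto intro!: derivative_eq_intros simp: has_real_derivative_iff_has_vector_derivative[symmetric])
  then show ?thesis
    by (simp add: diff_divide_distrib)
qed

lemma has_integral_exp_backward:
  fixes lam :: real
  assumes "t \<le> b" "lam > 0"
  shows "((\<lambda>s. exp (- lam * (s - t))) has_integral (1 - exp (- lam * (b - t))) / lam) {t..b}"
proof -
  have "((\<lambda>s. exp (- lam * (s - t))) has_integral - exp (- lam * (b - t)) / lam - - exp (- lam * (t - t)) / lam) {t..b}"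
    using assms
    by (intro fundamental_theorem_of_calculus)
      (auto intro!: derivative_eq_intros simp: has_real_derivative_iff_has_vector_derivative[symmetric])
  then show ?thesis
    by (simp add: diff_divide_distrib)
qed

lemma bounded_on_Icc:
  fixes f :: "real \<Rightarrow> 'a::real_normed_vector"
  assumes "continuous_on {a..b} f"
  obtains M where "\<And>s. s \<in> {a..b} \<Longrightarrow> norm (f s) \<le> M"
  using compact_imp_bounded[OF compact_continuous_image[OF assms compact_Icc]]
  unfolding bounded_iff by blast

lemma has_vector_derivative_Lipschitz_bound:
  fixes f :: "real \<Rightarrow> 'a::real_normed_vector"
  assumes S: "convex S" and f': "\<And>x. x \<in> S \<Longrightarrow> (f has_vector_derivative f' x) (at x within S)"
    and M: "\<And>x. x \<in> S \<Longrightarrow> norm (f' x) \<le> M" and xy: "x \<in> S" "y \<in> S"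
  shows "norm (f x - f y) \<le> M * \<bar>x - y\<bar>"
proof -
  have "onorm (\<lambda>h. h *\<^sub>R f' z) \<le> M" if "z \<in> S" for z
  proof (rule onorm_bound)
    show "0 \<le> M"
      using M[OF that] norm_ge_zero order_trans by blast
    show "norm (h *\<^sub>R f' z) \<le> M * norm h" for h
      using M[OF that] by (metis abs_ge_zero mult.commute mult_left_mono norm_scaleR real_norm_def)
  qed
  from differentiable_bound[OF S f'[unfolded has_vector_derivative_def] this xy]
  show ?thesis
    by simp
qed

lemma uniform_limit_tendsto_compose:
  fixes f :: "nat \<Rightarrow> 'a::metric_space \<Rightarrow> 'b::real_normed_vector"
  assumes lim: "uniform_limit S f g sequentially" and g: "continuous_on S g"
    and u: "u \<longlonglongrightarrow> x" "x \<in> S" "\<And>n. u n \<in> S"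
  shows "(\<lambda>n. f n (u n)) \<longlonglongrightarrow> g x"
proof -
  have "(\<lambda>n. f n (u n) - g (u n)) \<longlonglongrightarrow> 0"
  proof (rule tendstoI)
    fix e :: real assume e: "e > 0"
    show "\<forall>\<^sub>F n in sequentially. dist (f n (u n) - g (u n)) 0 < e"
      using uniform_limitD[OF lim e] by (rule eventually_mono) (simp add: u(3) dist_norm)
  qed
  moreover have "(\<lambda>n. g (u n)) \<longlonglongrightarrow> g x"
    using continuous_on_tendsto_compose[OF g u(1,2)] u(3) by simp
  ultimately show ?thesis
    using tendsto_add by fastforce
qed

section \<open>Transition matrices\<close>

text \<open>Uniqueness for \<open>X' = A X\<close>: the energy \<open>e\<^sup>-\<^sup>c\<^sup>t |X t|\<^sup>2\<close> is nonincreasing once \<open>c\<close>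
  dominates \<open>2 |A|\<close> on \<open>[0, t\<^sub>1]\<close>.\<close>

lemma linear_matrix_ode_zero:
  fixes A X :: "real \<Rightarrow> real^'n^'n"
  assumes cA: "continuous_on {0..} A"
    and X': "\<And>t. t \<ge> 0 \<Longrightarrow> (X has_vector_derivative A t ** X t) (at t within {0..})"
    and X0: "X 0 = 0" and t1: "0 < t1"
  shows "X t1 = 0"
proof -
  have "bounded (A ` {0..t1})"
    by (intro compact_imp_bounded compact_continuous_image continuous_on_subset[OF cA]) auto
  then obtain B where B: "\<And>t. t \<in> {0..t1} \<Longrightarrow> norm (A t) \<le> B"
    unfolding bounded_iff by blast
  obtain K where K: "K > 0" "\<And>(a :: real^'n^'n) (b :: real^'n^'n). norm (a ** b) \<le> norm a * norm b * K"
    using bounded_bilinear.pos_bounded[OF bounded_bilinear_matrix_matrix_mult] by blast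
  define c where "c = 2 * B * K"
  define g where "g t = exp (- c * t) * (X t \<bullet> X t)" for t
  define g' where "g' t = exp (- c * t) * (2 * (X t \<bullet> (A t ** X t)) - c * (X t \<bullet> X t))" for t
  have g': "(g has_derivative (\<lambda>h. g' t * h)) (at t within {0..t1})" if "0 \<le> t" "t \<le> t1" for t
  proof -
    have "(X has_vector_derivative A t ** X t) (at t within {0..t1})"
      by (rule has_vector_derivative_within_subset[OF X'[OF that(1)]]) auto
    from has_real_derivative_inner_self[OF this]
    have "(g has_real_derivative g' t) (at t within {0..t1})"
      unfolding g_def g'_def by (auto intro!: derivative_eq_intros simp: algebra_simps)
    then show ?thesis
      by (simp add: has_field_derivative_def)
  qed
  have g'_nonpos: "g' t \<le> 0" if "0 \<le> t" "t \<le> t1" for t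
  proof -
    have "X t \<bullet> (A t ** X t) \<le> norm (X t) * norm (A t ** X t)"
      by (rule norm_cauchy_schwarz)
    also have "\<dots> \<le> norm (X t) * (norm (A t) * norm (X t) * K)"
      by (intro mult_left_mono K(2)) simp
    also have "\<dots> \<le> norm (X t) * (B * norm (X t) * K)"
      using B[of t] that K(1) by (intro mult_left_mono mult_right_mono) auto
    also have "\<dots> = c / 2 * (X t \<bullet> X t)"
      unfolding c_def by (simp add: power2_norm_eq_inner[symmetric] power2_eq_square)
    finally show ?thesis
      unfolding g'_def by (simp add: mult_nonneg_nonpos)
  qed
  obtain \<xi> where "\<xi> \<in> {0<..<t1}" "g t1 - g 0 = g' \<xi> * (t1 - 0)"
    using mvt_simple[OF t1 g'] by blast
  then have "g t1 \<le> 0"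
    using g'_nonpos[of \<xi>] t1 X0 unfolding g_def by (simp add: mult_nonpos_nonneg)
  then have "X t1 \<bullet> X t1 \<le> 0"
    unfolding g_def by (simp add: mult_le_0_iff)
  then show ?thesis
    using inner_gt_zero_iff[of "X t1"] by linarith
qed

context
  fixes A :: "real \<Rightarrow> real^'n^'n" and T :: "real \<Rightarrow> real \<Rightarrow> real^'n^'n"
  assumes T: "transition_matrix A T" and cA: "continuous_on {0..} A"
begin

lemma transition_matrix_diag: "s \<ge> 0 \<Longrightarrow> T s s = mat 1"
  using T unfolding transition_matrix_def by blast

lemma transition_matrix_deriv:
  "s \<ge> 0 \<Longrightarrow> t \<ge> 0 \<Longrightarrow> ((\<lambda>u. T u s) has_vector_derivative A t ** T t s) (at t within {0..})"
  using T unfolding transition_matrix_def by blast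

lemma transition_matrix_factor:
  assumes s: "s \<ge> 0" and t: "t \<ge> 0"
  shows "T t s = T t 0 ** T 0 s"
proof (cases "t = 0")
  case False
  define X where "X u = T u s - T u 0 ** T 0 s" for u
  have "X t = 0"
  proof (rule linear_matrix_ode_zero[OF cA])
    fix u :: real assume u: "u \<ge> 0"
    have "((\<lambda>u. T u 0 ** T 0 s) has_vector_derivative (A u ** T u 0) ** T 0 s) (at u within {0..})"
      using bounded_bilinear.has_vector_derivative[OF bounded_bilinear_matrix_matrix_mult
          transition_matrix_deriv[OF order_refl u] has_vector_derivative_const] by simp
    then show "(X has_vector_derivative A u ** X u) (at u within {0..})"
      unfolding X_def
      by (rule has_vector_derivative_diff[OF transition_matrix_deriv[OF s u], THEN has_vector_derivative_eq_rhs])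
        (simp add: matrix_mul_assoc matrix_diff_ldistrib)
  qed (use transition_matrix_diag[of 0] t False in \<open>auto simp: X_def\<close>)
  then show ?thesis
    unfolding X_def by simp
qed (simp add: transition_matrix_diag)

lemma transition_matrix_inverse:
  assumes "s \<ge> 0"
  shows "T s 0 ** T 0 s = mat 1" "T 0 s ** T s 0 = mat 1"
proof -
  show "T s 0 ** T 0 s = mat 1"
    using transition_matrix_factor[of s s] transition_matrix_diag[of s] assms by simp
  then show "T 0 s ** T s 0 = mat 1"
    using matrix_left_right_inverse by blast
qed

lemma continuous_on_transition_matrix: "continuous_on {0..} (\<lambda>t. T t 0)"
  unfolding continuous_on_eq_continuous_within
  using transition_matrix_deriv[OF order_refl] has_vector_derivative_continuous by blast

end

lemma continuous_on_inverse_matrix: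
  fixes Phi Psi :: "real \<Rightarrow> real^'n^'n"
  assumes cont: "continuous_on S Phi"
    and inv: "\<And>s. s \<in> S \<Longrightarrow> Phi s ** Psi s = mat 1" "\<And>s. s \<in> S \<Longrightarrow> Psi s ** Phi s = mat 1"
  shows "continuous_on S Psi"
  unfolding continuous_on_def
proof
  fix x assume x: "x \<in> S"
  obtain K where K: "K > 0" "\<And>(a :: real^'n^'n) (b :: real^'n^'n). norm (a ** b) \<le> norm a * norm b * K"
    using bounded_bilinear.pos_bounded[OF bounded_bilinear_matrix_matrix_mult] by blast
  define p where "p = norm (Psi x)"
  define \<delta> where "\<delta> x' = norm (Phi x - Phi x')" for x'
  have \<delta>: "(\<delta> \<longlongrightarrow> 0) (at x within S)"
  proof -
    have "((\<lambda>x'. Phi x' - Phi x) \<longlongrightarrow> 0) (at x within S)"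
      using cont x unfolding continuous_on_def by (blast intro: Lim_null[THEN iffD1])
    then show ?thesis
      unfolding \<delta>_def by (subst norm_minus_commute) (rule tendsto_norm_zero)
  qed
  have diff_le: "norm (Psi x' - Psi x) \<le> 2 * K * K * p * p * \<delta> x'"
    if x': "x' \<in> S" and small: "K * K * p * \<delta> x' \<le> 1 / 2" for x'
  proof -
    define q where "q = norm (Psi x')"
    have "Psi x' - Psi x = Psi x' ** (Phi x - Phi x') ** Psi x"
    proof -
      have "Psi x' ** (Phi x - Phi x') ** Psi x = Psi x' ** (Phi x ** Psi x) - (Psi x' ** Phi x') ** Psi x"
        by (simp add: matrix_diff_ldistrib matrix_diff_rdistrib matrix_mul_assoc)
      then show ?thesis
        using inv(1)[OF x] inv(2)[OF x'] by simp
    qed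
    then have "norm (Psi x' - Psi x) = norm (Psi x' ** (Phi x - Phi x') ** Psi x)"
      by simp
    also have "\<dots> \<le> norm (Psi x' ** (Phi x - Phi x')) * p * K"
      unfolding p_def by (rule K(2))
    also have "\<dots> \<le> q * \<delta> x' * K * p * K"
      unfolding q_def \<delta>_def p_def using K(1) by (intro mult_right_mono K(2)) auto
    finally have le: "norm (Psi x' - Psi x) \<le> q * (K * K * p * \<delta> x')"
      by (simp add: algebra_simps)
    have "q \<le> p + norm (Psi x' - Psi x)"
      unfolding q_def p_def by (rule norm_triangle_sub)
    also have "\<dots> \<le> p + q / 2"
      using le mult_left_mono[OF small, of q] unfolding q_def by simp
    finally have "q \<le> 2 * p"
      by simp
    then have "q * (K * K * p * \<delta> x') \<le> 2 * p * (K * K * p * \<delta> x')"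
      using K(1) by (intro mult_right_mono) (auto simp: p_def \<delta>_def)
    then show ?thesis
      using le by (simp add: algebra_simps)
  qed
  have "\<forall>\<^sub>F x' in at x within S. K * K * p * \<delta> x' < 1 / 2"
    by (rule order_tendstoD(2)[OF tendsto_mult_right_zero[OF \<delta>]]) simp
  moreover have "\<forall>\<^sub>F x' in at x within S. x' \<in> S"
    by (simp add: eventually_at_filter)
  ultimately have "\<forall>\<^sub>F x' in at x within S. norm (Psi x' - Psi x) \<le> 2 * K * K * p * p * \<delta> x'"
    by eventually_elim (simp add: diff_le)
  then have "((\<lambda>x'. Psi x' - Psi x) \<longlongrightarrow> 0) (at x within S)"
    by (rule Lim_null_comparison) (rule tendsto_mult_right_zero[OF \<delta>])
  then show "(Psi \<longlongrightarrow> Psi x) (at x within S)"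
    by (rule Lim_null[THEN iffD2])
qed

section \<open>Exponential dichotomies\<close>

locale exp_dichotomy_setting = vector_norm nrm
  for nrm :: "real^'n \<Rightarrow> real" +
  fixes A :: "real \<Rightarrow> real^'n^'n" and T :: "real \<Rightarrow> real \<Rightarrow> real^'n^'n"
    and P :: "real \<Rightarrow> real^'n^'n" and N lam :: real
  assumes transition: "transition_matrix A T" and continuous_A: "continuous_on {0..} A"
    and P_commute: "\<And>t s. t \<ge> 0 \<Longrightarrow> s \<ge> 0 \<Longrightarrow> P t ** T t s = T t s ** P s"
    and stable_bound: "\<And>t s. 0 \<le> s \<Longrightarrow> s \<le> t \<Longrightarrow> mnorm nrm (T t s ** P s) \<le> N * exp (- lam * (t - s))"
    and unstable_bound:
      "\<And>t s. 0 \<le> t \<Longrightarrow> t \<le> s \<Longrightarrow> mnorm nrm (T t s ** (mat 1 - P s)) \<le> N * exp (- lam * (s - t))"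
    and lam_pos: "lam > 0" and N_pos: "N > 0"
begin

abbreviation Phi :: "real \<Rightarrow> real^'n^'n" where "Phi t \<equiv> T t 0"
abbreviation Psi :: "real \<Rightarrow> real^'n^'n" where "Psi s \<equiv> T 0 s"

lemma Phi_Psi: "s \<ge> 0 \<Longrightarrow> Phi s ** Psi s = mat 1"
  and Psi_Phi: "s \<ge> 0 \<Longrightarrow> Psi s ** Phi s = mat 1"
  using transition_matrix_inverse[OF transition continuous_A] by blast+

lemma T_eq: "s \<ge> 0 \<Longrightarrow> t \<ge> 0 \<Longrightarrow> T t s = Phi t ** Psi s"
  by (rule transition_matrix_factor[OF transition continuous_A])

lemma Phi_0 [simp]: "Phi 0 = mat 1"
  by (simp add: transition_matrix_diag[OF transition continuous_A])

lemma continuous_on_Phi: "continuous_on {0..} Phi"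
  by (rule continuous_on_transition_matrix[OF transition continuous_A])

lemma continuous_on_Psi: "continuous_on {0..} Psi"
  by (rule continuous_on_inverse_matrix[OF continuous_on_Phi]) (auto simp: Phi_Psi Psi_Phi)

lemma P_eq: "s \<ge> 0 \<Longrightarrow> P s = Phi s ** P 0 ** Psi s"
proof -
  assume s: "s \<ge> 0"
  have "P s = P s ** Phi s ** Psi s"
    using Phi_Psi[OF s] by (simp add: matrix_mul_assoc[symmetric])
  also have "\<dots> = Phi s ** P 0 ** Psi s"
    using P_commute[of s 0] s by simp
  finally show ?thesis .
qed

lemma stable_kernel:
  assumes "0 \<le> s" "0 \<le> t"
  shows "T t s ** P s = Phi t ** P 0 ** Psi s"
proof -
  have "T t s ** P s = (Phi t ** Psi s) ** (Phi s ** P 0 ** Psi s)"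
    by (simp only: T_eq[OF assms] P_eq[OF assms(1)])
  also have "\<dots> = Phi t ** (Psi s ** Phi s) ** P 0 ** Psi s"
    by (simp add: matrix_mul_assoc)
  finally show ?thesis
    using Psi_Phi[OF assms(1)] by simp
qed

lemma unstable_kernel:
  assumes "0 \<le> s" "0 \<le> t"
  shows "T t s ** (mat 1 - P s) = Phi t ** (mat 1 - P 0) ** Psi s"
proof -
  have "T t s ** (mat 1 - P s) = Phi t ** Psi s - Phi t ** P 0 ** Psi s"
    using stable_kernel[OF assms] by (simp add: matrix_diff_ldistrib T_eq[OF assms])
  also have "\<dots> = Phi t ** (mat 1 - P 0) ** Psi s"
    by (simp add: matrix_diff_ldistrib matrix_diff_rdistrib)
  finally show ?thesis .
qed

text \<open>The Green kernel \<open>\<Phi>(t) P(0) \<Psi>(s)\<close> (for \<open>s \<le> t\<close>) and \<open>\<Phi>(t) (I - P(0)) \<Psi>(s)\<close> (for \<open>s \<ge> t\<close>)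
  decays like \<open>N e\<^sup>-\<^sup>\<lambda>\<^sup>|\<^sup>t\<^sup>-\<^sup>s\<^sup>|\<close>, so each half contributes at most \<open>N B / \<lambda>\<close>.\<close>

lemma stable_integral_bound:
  assumes t: "0 \<le> t" and cH: "continuous_on {0..t} H" and B: "\<And>s. s \<in> {0..t} \<Longrightarrow> nrm (H s) \<le> B"
  shows "nrm (integral {0..t} (\<lambda>s. (Phi t ** P 0 ** Psi s) *v H s)) \<le> N * B / lam"
proof -
  have B0: "0 \<le> B"
    using B[of 0] t nrm_nonneg[of "H 0"] by simp
  have "continuous_on {0..t} (\<lambda>s. (Phi t ** P 0 ** Psi s) *v H s)"
    by (intro continuous_intros cH continuous_on_subset[OF continuous_on_Psi]) auto
  then have "nrm (integral {0..t} (\<lambda>s. (Phi t ** P 0 ** Psi s) *v H s))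
      \<le> N * B * ((1 - exp (- lam * (t - 0))) / lam)"
  proof (rule has_integral_nrm_le[OF integrable_integral[OF integrable_continuous_interval]])
    show "((\<lambda>s. N * B * exp (- lam * (t - s))) has_integral N * B * ((1 - exp (- lam * (t - 0))) / lam)) {0..t}"
      using has_integral_mult_right[OF has_integral_exp_forward[OF t lam_pos], of "N * B"] by simp
    fix s assume s: "s \<in> {0..t}"
    have "nrm ((Phi t ** P 0 ** Psi s) *v H s) \<le> mnorm nrm (T t s ** P s) * nrm (H s)"
      using stable_kernel[of s t] s mnorm_mult_le by simp
    also have "\<dots> \<le> N * exp (- lam * (t - s)) * B"
      using stable_bound[of s t] s B[OF s] N_pos by (intro mult_mono) (auto simp: nrm_nonneg)
    finally show "nrm ((Phi t ** P 0 ** Psi s) *v H s) \<le> N * B * exp (- lam * (t - s))"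
      by (simp add: algebra_simps)
  qed
  also have "\<dots> \<le> N * B * (1 / lam)"
    using N_pos B0 lam_pos by (intro mult_left_mono divide_right_mono) auto
  finally show ?thesis
    by simp
qed

lemma unstable_integral_bound:
  assumes t: "0 \<le> t" "t \<le> b" and cH: "continuous_on {t..b} H" and B: "\<And>s. s \<in> {t..b} \<Longrightarrow> nrm (H s) \<le> B"
  shows "nrm (integral {t..b} (\<lambda>s. (Phi t ** (mat 1 - P 0) ** Psi s) *v H s)) \<le> N * B / lam"
proof -
  have B0: "0 \<le> B"
    using B[of t] t nrm_nonneg[of "H t"] by simp
  have "continuous_on {t..b} (\<lambda>s. (Phi t ** (mat 1 - P 0) ** Psi s) *v H s)"
    by (intro continuous_intros cH continuous_on_subset[OF continuous_on_Psi]) (use t in auto)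
  then have "nrm (integral {t..b} (\<lambda>s. (Phi t ** (mat 1 - P 0) ** Psi s) *v H s))
      \<le> N * B * ((1 - exp (- lam * (b - t))) / lam)"
  proof (rule has_integral_nrm_le[OF integrable_integral[OF integrable_continuous_interval]])
    show "((\<lambda>s. N * B * exp (- lam * (s - t))) has_integral N * B * ((1 - exp (- lam * (b - t))) / lam)) {t..b}"
      using has_integral_mult_right[OF has_integral_exp_backward[OF t(2) lam_pos], of "N * B"] by simp
    fix s assume s: "s \<in> {t..b}"
    have "nrm ((Phi t ** (mat 1 - P 0) ** Psi s) *v H s) \<le> mnorm nrm (T t s ** (mat 1 - P s)) * nrm (H s)"
      using unstable_kernel[of s t] s t mnorm_mult_le by simp
    also have "\<dots> \<le> N * exp (- lam * (s - t)) * B"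
      using unstable_bound[of t s] s t B[OF s] N_pos by (intro mult_mono) (auto simp: nrm_nonneg)
    finally show "nrm ((Phi t ** (mat 1 - P 0) ** Psi s) *v H s) \<le> N * B * exp (- lam * (s - t))"
      by (simp add: algebra_simps)
  qed
  also have "\<dots> \<le> N * B * (1 / lam)"
    using N_pos B0 lam_pos by (intro mult_left_mono divide_right_mono) auto
  finally show ?thesis
    by simp
qed

lemma variation_of_constants:
  assumes b: "0 \<le> b" and cH: "continuous_on {0..b} H" and t: "t \<in> {0..b}"
  shows "((\<lambda>t. Phi t *v (c + integral {0..t} (\<lambda>s. Psi s *v H s))) has_vector_derivative
           A t *v (Phi t *v (c + integral {0..t} (\<lambda>s. Psi s *v H s))) + H t) (at t within {0..b})"
proof -
  have Phi': "(Phi has_vector_derivative A t ** Phi t) (at t within {0..b})"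
    using transition_matrix_deriv[OF transition continuous_A order_refl, of t] t
    by (auto intro: has_vector_derivative_within_subset)
  have "continuous_on {0..b} (\<lambda>s. Psi s *v H s)"
    by (intro continuous_intros cH continuous_on_subset[OF continuous_on_Psi]) auto
  from integral_has_vector_derivative[OF this t]
  have "((\<lambda>t. c + integral {0..t} (\<lambda>s. Psi s *v H s)) has_vector_derivative Psi t *v H t) (at t within {0..b})"
    using has_vector_derivative_add[OF has_vector_derivative_const] by fastforce
  from bounded_bilinear.has_vector_derivative[OF bounded_bilinear_matrix_vector_mult Phi' this]
  show ?thesis
    using t by (simp add: matrix_vector_mul_assoc Phi_Psi add.commute)
qed

lemma green_representation:
  assumes t: "0 \<le> t" "t \<le> b" and H: "continuous_on {0..b} H"
  shows "Phi t *v (- ((mat 1 - P 0) *v integral {0..b} (\<lambda>s. Psi s *v H s)) + integral {0..t} (\<lambda>s. Psi s *v H s))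
    = integral {0..t} (\<lambda>s. (Phi t ** P 0 ** Psi s) *v H s) - integral {t..b} (\<lambda>s. (Phi t ** (mat 1 - P 0) ** Psi s) *v H s)"
proof -
  define g where "g = (\<lambda>s. Psi s *v H s)"
  have g: "continuous_on {0..b} g"
    unfolding g_def by (intro continuous_intros H continuous_on_subset[OF continuous_on_Psi]) auto
  have g1: "g integrable_on {0..t}" and g2: "g integrable_on {t..b}"
    using t by (auto intro!: integrable_continuous_interval continuous_on_subset[OF g])
  have split: "integral {0..b} g = integral {0..t} g + integral {t..b} g"
    using Henstock_Kurzweil_Integration.integral_combine[OF t integrable_continuous_interval[OF g]] by simp
  have pull: "M *v integral S g = integral S (\<lambda>s. (M ** Psi s) *v H s)" if "g integrable_on S" for M S
    using integral_linear[OF that matrix_vector_mul_bounded_linear[of M]]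
    by (simp add: o_def g_def matrix_vector_mul_assoc)
  have "Phi t *v (- ((mat 1 - P 0) *v integral {0..b} g) + integral {0..t} g)
      = Phi t *v (P 0 *v integral {0..t} g - (mat 1 - P 0) *v integral {t..b} g)"
    unfolding split by (simp add: matrix_vector_right_distrib matrix_vector_mult_diff_rdistrib algebra_simps)
  also have "\<dots> = (Phi t ** P 0) *v integral {0..t} g - (Phi t ** (mat 1 - P 0)) *v integral {t..b} g"
    by (simp only: matrix_vector_mult_diff_distrib matrix_vector_mul_assoc)
  also have "\<dots> = integral {0..t} (\<lambda>s. (Phi t ** P 0 ** Psi s) *v H s)
      - integral {t..b} (\<lambda>s. (Phi t ** (mat 1 - P 0) ** Psi s) *v H s)"
    by (simp only: pull[OF g1] pull[OF g2])
  finally show ?thesis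
    by (simp add: g_def)
qed

lemma green_bound:
  assumes t: "0 \<le> t" "t \<le> b" and H: "continuous_on {0..b} H"
    and B: "\<And>s. s \<in> {0..b} \<Longrightarrow> nrm (H s) \<le> B"
  shows "nrm (Phi t *v (- ((mat 1 - P 0) *v integral {0..b} (\<lambda>s. Psi s *v H s))
            + integral {0..t} (\<lambda>s. Psi s *v H s))) \<le> 2 * N * B / lam"
proof -
  let ?I1 = "integral {0..t} (\<lambda>s. (Phi t ** P 0 ** Psi s) *v H s)"
  let ?I2 = "integral {t..b} (\<lambda>s. (Phi t ** (mat 1 - P 0) ** Psi s) *v H s)"
  have I1: "nrm ?I1 \<le> N * B / lam"
    using t by (intro stable_integral_bound continuous_on_subset[OF H] B) auto
  have I2: "nrm ?I2 \<le> N * B / lam"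
    using t by (intro unstable_integral_bound continuous_on_subset[OF H] B) auto
  have "nrm (?I1 - ?I2) \<le> nrm ?I1 + nrm ?I2"
    using nrm_triangle[of ?I1 "- ?I2"] by simp
  also have "\<dots> \<le> N * B / lam + N * B / lam"
    using I1 I2 by (rule add_mono)
  also have "\<dots> = 2 * N * B / lam"
    by (simp add: field_simps)
  finally show ?thesis
    unfolding green_representation[OF t H] .
qed

end

lemma exp_dichotomy_setting_exists:
  assumes "is_norm nrm" "continuous_on {0..} A" "exp_dichotomy nrm A P N lam"
  obtains T where "exp_dichotomy_setting nrm A T P N lam"
proof -
  from assms(3) obtain T where "N > 0" "lam > 0" "transition_matrix A T"
    "\<forall>t\<ge>0. \<forall>s\<ge>0. P t ** T t s = T t s ** P s"
    "\<forall>t s. 0 \<le> s \<and> s \<le> t \<longrightarrow> mnorm nrm (T t s ** P s) \<le> N * exp (- lam * (t - s))"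
    "\<forall>t s. 0 \<le> t \<and> t \<le> s \<longrightarrow> mnorm nrm (T t s ** (mat 1 - P s)) \<le> N * exp (- lam * (s - t))"
    unfolding exp_dichotomy_def by blast
  then have "exp_dichotomy_setting nrm A T P N lam"
    using assms(1,2)
    by (intro exp_dichotomy_setting.intro vector_norm.intro exp_dichotomy_setting_axioms.intro) auto
  then show ?thesis
    by (rule that)
qed

lemma Ivl_nonneg: "t \<in> Ivl \<tau> \<Longrightarrow> 0 \<le> t"
  by (simp add: Ivl_def)

lemma zero_in_Ivl: "\<tau> > 0 \<Longrightarrow> 0 \<in> Ivl \<tau>"
  by (simp add: Ivl_def zero_ereal_def)

lemma Icc_subset_Ivl: "b \<in> Ivl \<tau> \<Longrightarrow> {0..b} \<subseteq> Ivl \<tau>"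
  unfolding Ivl_def by auto (meson ereal_less_eq(3) le_less_trans)

lemma at_within_Ivl:
  assumes t: "t \<in> Ivl \<tau>"
  obtains b where "b \<in> Ivl \<tau>" "t \<le> b" "at t within Ivl \<tau> = at t within {0..b}"
proof (cases "\<exists>b\<in>Ivl \<tau>. t < b")
  case True
  then obtain b where b: "b \<in> Ivl \<tau>" "t < b"
    by blast
  have "at t within Ivl \<tau> = at t within {0..b}"
  proof (rule at_within_nhd[of t "{t - 1 <..< b}"])
    show "Ivl \<tau> \<inter> {t - 1<..<b} - {t} = {0..b} \<inter> {t - 1<..<b} - {t}"
      using Icc_subset_Ivl[OF b(1)] Ivl_nonneg by fastforce
  qed (use b in auto)
  then show ?thesis
    using that b by auto
next
  case False
  then have "Ivl \<tau> = {0..t}"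
    using Icc_subset_Ivl[OF t] Ivl_nonneg by force
  then show ?thesis
    using that t by auto
qed

lemma at_within_Ivl_nontrivial:
  assumes t: "t \<in> Ivl \<tau>"
  shows "at t within Ivl \<tau> \<noteq> bot"
proof -
  obtain s where s: "ereal t < ereal s" "ereal s < \<tau>"
    using t ereal_dense2 unfolding Ivl_def by blast
  have "at t within {t..s} \<noteq> bot"
    using s by (simp add: at_within_Icc_at_right)
  moreover have "{t..s} \<subseteq> Ivl \<tau>"
    using t s unfolding Ivl_def by auto (meson ereal_less_eq(3) le_less_trans)
  ultimately show ?thesis
    by (metis at_le bot.extremum_uniqueI)
qed

lemma Ivl_exhaustion:
  assumes "\<tau> > 0"
  obtains Ts :: "nat \<Rightarrow> real"
  where "\<And>k. Ts k \<in> Ivl \<tau>" "mono Ts" "\<And>t. t \<in> Ivl \<tau> \<Longrightarrow> \<exists>k. t \<le> Ts k"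
proof (cases \<tau>)
  case (real c)
  then have c: "c > 0"
    using assms by (simp add: zero_ereal_def)
  show ?thesis
  proof
    show "c - c / (real k + 2) \<in> Ivl \<tau>" for k
      using c unfolding Ivl_def real by (simp add: field_simps)
    show "mono (\<lambda>k. c - c / (real k + 2))"
      using c by (intro monoI diff_left_mono divide_left_mono) auto
    fix t assume "t \<in> Ivl \<tau>"
    then have t: "0 \<le> t" "t < c"
      unfolding Ivl_def real by auto
    obtain k :: nat where k: "c / (c - t) \<le> real k"
      using real_arch_simple by blast
    have "c \<le> (real k + 2) * (c - t)"
      using k t by (simp add: field_simps)
    then have "c / (real k + 2) \<le> c - t"
      by (simp add: field_simps)
    then show "\<exists>k. t \<le> c - c / (real k + 2)"
      by (intro exI[of _ k]) simp
  qed
next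
  case PInf
  show ?thesis
    by (rule that[of real]) (auto simp: Ivl_def PInf mono_def real_arch_simple)
qed (use assms in simp)

section \<open>Bounded solutions under bounded forcing\<close>

locale bounded_forcing = exp_dichotomy_setting nrm A T P N lam
  for nrm :: "real^'n \<Rightarrow> real" and A T P N lam +
  fixes F :: "real \<Rightarrow> real^'n \<Rightarrow> real^'n" and \<tau> :: ereal and B :: real
  assumes tau_pos: "\<tau> > 0"
    and continuous_F: "continuous_on (Ivl \<tau> \<times> UNIV) (\<lambda>(t, x). F t x)"
    and F_bound: "\<And>t x. t \<in> Ivl \<tau> \<Longrightarrow> nrm (F t x) \<le> B"
begin

lemma B_nonneg: "0 \<le> B"
  using F_bound[OF zero_in_Ivl[OF tau_pos]] nrm_nonneg order_trans by blast

lemma continuous_on_F_comp: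
  assumes "continuous_on S a" "continuous_on S w" "a ` S \<subseteq> Ivl \<tau>"
  shows "continuous_on S (\<lambda>s. F (a s) (w s))"
  using continuous_on_compose2[OF continuous_F continuous_on_Pair[OF assms(1,2)]] assms(3) by auto

lemma isCont_F: "t \<in> Ivl \<tau> \<Longrightarrow> isCont (F t) x"
  using continuous_on_F_comp[of UNIV "\<lambda>_. t" "\<lambda>x. x"]
  by (simp add: continuous_on_eq_continuous_at continuous_on_const continuous_on_id image_subset_iff)

lemma delayed_integrand_bound:
  assumes b: "b \<in> Ivl \<tau>"
  obtains M where "\<And>s x. s \<in> {0..b} \<Longrightarrow> norm (Psi s *v F s x) \<le> M"
proof -
  obtain M1 where M1: "\<And>s. s \<in> {0..b} \<Longrightarrow> norm (Psi s) \<le> M1"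
    using bounded_on_Icc[OF continuous_on_subset[OF continuous_on_Psi]] by (metis atLeastAtMost_iff atLeast_iff subsetI)
  obtain D where D: "D > 0" "\<And>x. norm x \<le> D * nrm x"
    using norm_le_nrm by blast
  obtain K where K: "K > 0" "\<And>(M :: real^'n^'n) x. norm (M *v x) \<le> norm M * norm x * K"
    using bounded_bilinear.pos_bounded[OF bounded_bilinear_matrix_vector_mult] by blast
  have "norm (Psi s *v F s x) \<le> M1 * (D * B) * K" if s: "s \<in> {0..b}" for s x
  proof -
    have "norm (F s x) \<le> D * B"
      using D F_bound[of s x] Icc_subset_Ivl[OF b] s
      by (meson mult_left_mono less_imp_le order_trans subsetD)
    then have "norm (Psi s) * norm (F s x) \<le> M1 * (D * B)"
      using M1[OF s] by (intro mult_mono) (auto intro: order_trans[OF norm_ge_zero])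
    then show ?thesis
      using K by (meson mult_right_mono less_imp_le order_trans)
  qed
  then show ?thesis
    using that by blast
qed

text \<open>Tonelli's scheme: the delay \<open>h\<close> makes the right-hand side on \<open>[0, (k + 1) h]\<close> depend only on
  the values on \<open>[0, k h]\<close>, so iterating \<open>tonelli_step\<close> from a constant function solves the delayed
  integral equation on \<open>[0, b]\<close> after \<open>\<lceil>b / h\<rceil>\<close> steps.\<close>

definition tonelli_step :: "real \<Rightarrow> real^'n \<Rightarrow> (real \<Rightarrow> real^'n) \<Rightarrow> real \<Rightarrow> real^'n" where
  "tonelli_step h \<xi> z t = Phi t *v (\<xi> + integral {0..t} (\<lambda>s. Psi s *v F s (z (max 0 (s - h)))))"

definition tonelli_iterate :: "real \<Rightarrow> real^'n \<Rightarrow> nat \<Rightarrow> real \<Rightarrow> real^'n" where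
  "tonelli_iterate h \<xi> k = (tonelli_step h \<xi> ^^ k) (\<lambda>_. \<xi>)"

definition tonelli_solution :: "real \<Rightarrow> real \<Rightarrow> real^'n \<Rightarrow> real \<Rightarrow> real^'n" where
  "tonelli_solution b h \<xi> = tonelli_iterate h \<xi> (nat \<lceil>b / h\<rceil>)"

lemma tonelli_iterate_0: "tonelli_iterate h \<xi> 0 = (\<lambda>_. \<xi>)"
  and tonelli_iterate_Suc: "tonelli_iterate h \<xi> (Suc k) = tonelli_step h \<xi> (tonelli_iterate h \<xi> k)"
  by (simp_all add: tonelli_iterate_def)

lemma continuous_on_delayed_integrand:
  assumes b: "b \<in> Ivl \<tau>" and h: "h > 0" and z: "continuous_on {0..b} z"
  shows "continuous_on {0..b} (\<lambda>s. Psi s *v F s (z (max 0 (s - h))))"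
proof -
  have "continuous_on {0..b} (\<lambda>s. z (max 0 (s - h)))"
    by (rule continuous_on_compose2[OF z]) (use h in \<open>auto intro!: continuous_intros\<close>)
  then have "continuous_on {0..b} (\<lambda>s. F s (z (max 0 (s - h))))"
    by (intro continuous_on_F_comp continuous_on_id) (use Icc_subset_Ivl[OF b] in auto)
  then show ?thesis
    by (intro continuous_intros continuous_on_subset[OF continuous_on_Psi]) auto
qed

lemma continuous_on_tonelli_step:
  assumes b: "b \<in> Ivl \<tau>" and h: "h > 0" and z: "continuous_on {0..b} z"
  shows "continuous_on {0..b} (tonelli_step h \<xi> z)"
  unfolding tonelli_step_def
  by (intro continuous_intros continuous_on_subset[OF continuous_on_Phi] indefinite_integral_continuous_1
      integrable_continuous_interval continuous_on_delayed_integrand[OF b h z]) auto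

lemma continuous_on_tonelli_iterate:
  "b \<in> Ivl \<tau> \<Longrightarrow> h > 0 \<Longrightarrow> continuous_on {0..b} (tonelli_iterate h \<xi> k)"
  by (induction k) (simp_all add: tonelli_iterate_0 tonelli_iterate_Suc continuous_on_tonelli_step)

lemma tonelli_iterate_stable:
  assumes h: "h > 0" and t: "0 \<le> t" "t \<le> real k * h"
  shows "tonelli_iterate h \<xi> (Suc k) t = tonelli_iterate h \<xi> k t"
  using t
proof (induction k arbitrary: t)
  case 0
  then show ?case
    by (simp add: tonelli_iterate_Suc tonelli_iterate_0 tonelli_step_def)
next
  case (Suc k)
  have eq: "tonelli_iterate h \<xi> (Suc k) (max 0 (s - h)) = tonelli_iterate h \<xi> k (max 0 (s - h))"
    if "s \<in> {0..t}" for s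
    using that Suc.prems h by (intro Suc.IH) (auto simp: algebra_simps)
  have "tonelli_iterate h \<xi> (Suc (Suc k)) t = tonelli_step h \<xi> (tonelli_iterate h \<xi> (Suc k)) t"
    by (simp only: tonelli_iterate_Suc)
  also have "\<dots> = tonelli_step h \<xi> (tonelli_iterate h \<xi> k) t"
    unfolding tonelli_step_def by (simp only: eq cong: integral_cong)
  also have "\<dots> = tonelli_iterate h \<xi> (Suc k) t"
    by (simp only: tonelli_iterate_Suc)
  finally show ?case .
qed

lemma tonelli_solution_fixed:
  assumes h: "h > 0" and t: "t \<in> {0..b}"
  shows "tonelli_step h \<xi> (tonelli_solution b h \<xi>) t = tonelli_solution b h \<xi> t"
proof -
  have "b / h \<le> real (nat \<lceil>b / h\<rceil>)"
    by linarith
  then have "b \<le> real (nat \<lceil>b / h\<rceil>) * h"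
    using h by (simp add: field_simps)
  then show ?thesis
    unfolding tonelli_solution_def tonelli_iterate_Suc[symmetric]
    using tonelli_iterate_stable[OF h] t by auto
qed

lemma tendsto_delayed_integral:
  assumes b: "b \<in> Ivl \<tau>" and h: "h > 0" and t: "t \<in> {0..b}"
    and zs: "\<And>m. continuous_on {0..b} (zs m)"
    and lim: "\<And>u. u \<in> {0..b} \<Longrightarrow> (\<lambda>m. zs m u) \<longlonglongrightarrow> z u"
  shows "(\<lambda>m. integral {0..t} (\<lambda>s. Psi s *v F s (zs m (max 0 (s - h)))))
           \<longlonglongrightarrow> integral {0..t} (\<lambda>s. Psi s *v F s (z (max 0 (s - h))))"
proof -
  obtain M where M: "\<And>s x. s \<in> {0..b} \<Longrightarrow> norm (Psi s *v F s x) \<le> M"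
    using delayed_integrand_bound[OF b] by blast
  have sub: "{0..t} \<subseteq> {0..b}"
    using t by auto
  show ?thesis
  proof (rule dominated_convergence(2))
    show "(\<lambda>s. Psi s *v F s (zs m (max 0 (s - h)))) integrable_on {0..t}" for m
      by (rule integrable_continuous_interval[OF continuous_on_subset[OF
            continuous_on_delayed_integrand[OF b h zs] sub]])
    show "(\<lambda>s. M) integrable_on {0..t}"
      by (rule integrable_continuous_interval[OF continuous_on_const])
    show "norm (Psi s *v F s (zs m (max 0 (s - h)))) \<le> M" if "s \<in> {0..t}" for m s
      using M that sub by blast
    show "(\<lambda>m. Psi s *v F s (zs m (max 0 (s - h)))) \<longlonglongrightarrow> Psi s *v F s (z (max 0 (s - h)))"
      if s: "s \<in> {0..t}" for s
    proof -
      have "max 0 (s - h) \<in> {0..b}" "s \<in> Ivl \<tau>"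
        using s t h Icc_subset_Ivl[OF b] by auto
      then show ?thesis
        using isCont_tendsto_compose[OF isCont_F lim] by (intro tendsto_intros) auto
    qed
  qed
qed

lemma tendsto_tonelli_iterate:
  assumes b: "b \<in> Ivl \<tau>" and h: "h > 0" and \<xi>: "xs \<longlonglongrightarrow> \<xi>" and t: "t \<in> {0..b}"
  shows "(\<lambda>m. tonelli_iterate h (xs m) k t) \<longlonglongrightarrow> tonelli_iterate h \<xi> k t"
  using t
proof (induction k arbitrary: t)
  case 0
  then show ?case
    using \<xi> by (simp add: tonelli_iterate_0)
next
  case (Suc k)
  have "(\<lambda>m. integral {0..t} (\<lambda>s. Psi s *v F s (tonelli_iterate h (xs m) k (max 0 (s - h)))))
      \<longlonglongrightarrow> integral {0..t} (\<lambda>s. Psi s *v F s (tonelli_iterate h \<xi> k (max 0 (s - h))))"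
    by (rule tendsto_delayed_integral[OF b h Suc.prems continuous_on_tonelli_iterate[OF b h] Suc.IH])
  then show ?case
    unfolding tonelli_iterate_Suc tonelli_step_def by (intro tendsto_intros \<xi>)
qed

definition unstable_correction :: "real \<Rightarrow> real \<Rightarrow> real^'n \<Rightarrow> real^'n" where
  "unstable_correction b h \<xi> =
     - ((mat 1 - P 0) *v integral {0..b} (\<lambda>s. Psi s *v F s (tonelli_solution b h \<xi> (max 0 (s - h)))))"

lemma continuous_on_unstable_correction:
  assumes b: "b \<in> Ivl \<tau>" and h: "h > 0"
  shows "continuous_on S (unstable_correction b h)"
proof (rule continuous_on_sequentiallyI)
  fix xs :: "nat \<Rightarrow> real^'n" and \<xi> assume "xs \<longlonglongrightarrow> \<xi>"
  with b h show "(\<lambda>m. unstable_correction b h (xs m)) \<longlonglongrightarrow> unstable_correction b h \<xi>"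
    unfolding unstable_correction_def tonelli_solution_def
    by (intro tendsto_intros tendsto_delayed_integral continuous_on_tonelli_iterate
        tendsto_tonelli_iterate) (auto simp: Ivl_nonneg)
qed

lemma continuous_on_delayed_forcing:
  assumes b: "b \<in> Ivl \<tau>" and h: "h > 0" and z: "continuous_on {0..b} z"
  shows "continuous_on {0..b} (\<lambda>s. F s (z (max 0 (s - h))))"
  using h by (intro continuous_on_F_comp continuous_intros continuous_on_compose2[OF z])
    (use Icc_subset_Ivl[OF b] in auto)

text \<open>By Brouwer's theorem the initial value can be chosen so that the solution carries no component
  along the unstable directions at time \<open>b\<close>; this is what keeps it bounded independently of \<open>b\<close>.\<close>

definition delayed_solution :: "real \<Rightarrow> real \<Rightarrow> (real \<Rightarrow> real^'n) \<Rightarrow> bool" where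
  "delayed_solution h b z \<longleftrightarrow> continuous_on {0..b} z \<and>
     (\<forall>t\<in>{0..b}. z t = Phi t *v (z 0 + integral {0..t} (\<lambda>s. Psi s *v F s (z (max 0 (s - h))))))"

lemma bounded_delayed_solution_exists:
  assumes b: "b \<in> Ivl \<tau>" and h: "h > 0"
  obtains z where "delayed_solution h b z" "\<And>t. t \<in> {0..b} \<Longrightarrow> nrm (z t) \<le> 2 * N * B / lam"
proof -
  let ?S = "{x. nrm x \<le> N * B / lam}"
  let ?z = "\<lambda>\<xi>. tonelli_solution b h \<xi>"
  let ?H = "\<lambda>\<xi> s. F s (?z \<xi> (max 0 (s - h)))"
  have b0: "0 \<le> b"
    using b by (rule Ivl_nonneg)
  have cz: "continuous_on {0..b} (?z \<xi>)" for \<xi>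
    unfolding tonelli_solution_def using b h by (rule continuous_on_tonelli_iterate)
  have cH: "continuous_on {0..b} (?H \<xi>)" for \<xi>
    by (rule continuous_on_delayed_forcing[OF b h cz])
  have bH: "nrm (?H \<xi> s) \<le> B" if "s \<in> {0..b}" for \<xi> s
    using F_bound Icc_subset_Ivl[OF b] that by blast
  have z_eq: "?z \<xi> t = Phi t *v (\<xi> + integral {0..t} (\<lambda>s. Psi s *v ?H \<xi> s))" if "t \<in> {0..b}" for \<xi> t
    using tonelli_solution_fixed[OF h that] unfolding tonelli_step_def by simp
  have "nrm (unstable_correction b h \<xi>) \<le> N * B / lam" for \<xi>
  proof -
    have "unstable_correction b h \<xi> = - integral {0..b} (\<lambda>s. (Phi 0 ** (mat 1 - P 0) ** Psi s) *v ?H \<xi> s)"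
      using green_representation[OF order_refl b0 cH, of \<xi>] unfolding unstable_correction_def by simp
    then show ?thesis
      using unstable_integral_bound[OF order_refl b0 cH bH] by simp
  qed
  then have "unstable_correction b h \<in> ?S \<rightarrow> ?S"
    by blast
  moreover have "?S \<noteq> {}"
    using B_nonneg N_pos lam_pos by (auto intro!: exI[of _ 0])
  ultimately obtain \<xi> where \<xi>: "unstable_correction b h \<xi> = \<xi>"
    using brouwer[OF compact_nrm_ball convex_nrm_ball _ continuous_on_unstable_correction[OF b h]]
    by blast
  show ?thesis
  proof
    have "?z \<xi> 0 = \<xi>"
      using z_eq[of 0 \<xi>] b0 by simp
    then show "delayed_solution h b (?z \<xi>)"
      unfolding delayed_solution_def using cz z_eq by simp
    show "nrm (?z \<xi> t) \<le> 2 * N * B / lam" if "t \<in> {0..b}" for t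
      using green_bound[OF _ _ cH bH, of t \<xi>] that z_eq[OF that, of \<xi>] \<xi>
      unfolding unstable_correction_def by simp
  qed
qed

end


section \<open>Passing to the limit\<close>

locale tonelli_approximations = bounded_forcing nrm A T P N lam F \<tau> B
  for nrm :: "real^'n \<Rightarrow> real" and A T P N lam F \<tau> B +
  fixes Ts hs :: "nat \<Rightarrow> real" and zs :: "nat \<Rightarrow> real \<Rightarrow> real^'n"
  assumes Ts_in: "\<And>k. Ts k \<in> Ivl \<tau>" and Ts_mono: "mono Ts"
    and Ts_exhaust: "\<And>t. t \<in> Ivl \<tau> \<Longrightarrow> \<exists>k. t \<le> Ts k"
    and hs_pos: "\<And>k. hs k > 0" and hs_lim: "hs \<longlonglongrightarrow> 0"
    and zs_solution: "\<And>k. delayed_solution (hs k) (Ts k) (zs k)"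
    and zs_bound: "\<And>k t. t \<in> {0..Ts k} \<Longrightarrow> nrm (zs k t) \<le> 2 * N * B / lam"
begin

lemma Ts_nonneg: "0 \<le> Ts k"
  using Ts_in by (rule Ivl_nonneg)

lemma continuous_on_zs: "continuous_on {0..Ts k} (zs k)"
  and zs_eq: "t \<in> {0..Ts k} \<Longrightarrow>
    zs k t = Phi t *v (zs k 0 + integral {0..t} (\<lambda>s. Psi s *v F s (zs k (max 0 (s - hs k)))))"
  using zs_solution[of k] unfolding delayed_solution_def by blast+

lemma zs_deriv:
  assumes t: "t \<in> {0..Ts k}"
  shows "(zs k has_vector_derivative A t *v zs k t + F t (zs k (max 0 (t - hs k)))) (at t within {0..Ts k})"
proof (rule has_vector_derivative_transform[OF t zs_eq])
  show "((\<lambda>t. Phi t *v (zs k 0 + integral {0..t} (\<lambda>s. Psi s *v F s (zs k (max 0 (s - hs k))))))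
      has_vector_derivative A t *v zs k t + F t (zs k (max 0 (t - hs k)))) (at t within {0..Ts k})"
    using variation_of_constants[OF Ts_nonneg continuous_on_delayed_forcing[OF Ts_in[of k] hs_pos[of k] continuous_on_zs]
        t, of "zs k 0"]
    unfolding zs_eq[OF t, symmetric] .
qed

definition zs_ext :: "nat \<Rightarrow> real \<Rightarrow> real^'n" where
  "zs_ext k t = zs k (min t (Ts k))"

lemma zs_ext_eq: "t \<in> {0..Ts k} \<Longrightarrow> zs_ext k t = zs k t"
  by (simp add: zs_ext_def)

lemma continuous_on_zs_ext: "continuous_on {0..} (zs_ext k)"
  unfolding zs_ext_def
  by (rule continuous_on_compose2[OF continuous_on_zs]) (auto intro!: continuous_intros simp: Ts_nonneg)

lemma zs_ext_bound: "0 \<le> t \<Longrightarrow> nrm (zs_ext k t) \<le> 2 * N * B / lam"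
  unfolding zs_ext_def using zs_bound Ts_nonneg[of k] by simp

lemma zs_ext_norm_bound: obtains D where "\<And>k t. 0 \<le> t \<Longrightarrow> norm (zs_ext k t) \<le> D"
proof -
  obtain D where D: "D > 0" "\<And>x. norm x \<le> D * nrm x"
    using norm_le_nrm by blast
  have "norm (zs_ext k t) \<le> D * (2 * N * B / lam)" if "0 \<le> t" for k t
    using D(2)[of "zs_ext k t"] zs_ext_bound[OF that, of k] D(1)
    by (meson mult_left_mono less_imp_le order_trans)
  then show ?thesis
    using that by blast
qed

text \<open>The derivatives are bounded on \<open>[0, Ts i]\<close> uniformly in \<open>k\<close>, so the approximations are
  equi-Lipschitz there.\<close>

lemma zs_ext_Lipschitz:
  obtains L where "\<And>k x y. x \<in> {0..Ts i} \<Longrightarrow> y \<in> {0..Ts i} \<Longrightarrow> norm (zs_ext k x - zs_ext k y) \<le> L * \<bar>x - y\<bar>"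
proof -
  obtain MA where MA: "\<And>s. s \<in> {0..Ts i} \<Longrightarrow> norm (A s) \<le> MA"
    using bounded_on_Icc[OF continuous_on_subset[OF continuous_A]] by (metis atLeastAtMost_iff atLeast_iff subsetI)
  obtain D where D: "D > 0" "\<And>x. norm x \<le> D * nrm x"
    using norm_le_nrm by blast
  obtain K where K: "K > 0" "\<And>(M :: real^'n^'n) x. norm (M *v x) \<le> norm M * norm x * K"
    using bounded_bilinear.pos_bounded[OF bounded_bilinear_matrix_vector_mult] by blast
  define L where "L = MA * (D * (2 * N * B / lam)) * K + D * B"
  have "norm (zs_ext k x - zs_ext k y) \<le> L * \<bar>x - y\<bar>" if x: "x \<in> {0..Ts i}" and y: "y \<in> {0..Ts i}" for k x y
  proof -
    let ?S = "{0..min (Ts i) (Ts k)}"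
    have deriv_bound: "norm (A t *v zs k t + F t (zs k (max 0 (t - hs k)))) \<le> L" if t: "t \<in> ?S" for t
    proof -
      have tk: "t \<in> {0..Ts k}" and ti: "t \<in> {0..Ts i}"
        using t by auto
      have "norm (zs k t) \<le> D * (2 * N * B / lam)"
        using D(2)[of "zs k t"] zs_bound[OF tk] D(1) by (meson mult_left_mono less_imp_le order_trans)
      then have "norm (A t) * norm (zs k t) \<le> MA * (D * (2 * N * B / lam))"
        using MA[OF ti] by (intro mult_mono) (auto intro: order_trans[OF norm_ge_zero])
      then have "norm (A t *v zs k t) \<le> MA * (D * (2 * N * B / lam)) * K"
        using K by (meson mult_right_mono less_imp_le order_trans)
      moreover have "norm (F t (zs k (max 0 (t - hs k)))) \<le> D * B"
        using D F_bound[of t] Icc_subset_Ivl[OF Ts_in[of k]] tk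
        by (meson mult_left_mono less_imp_le order_trans subsetD)
      ultimately show ?thesis
        unfolding L_def by (meson add_mono norm_triangle_le)
    qed
    have "norm (zs k (min x (Ts k)) - zs k (min y (Ts k))) \<le> L * \<bar>min x (Ts k) - min y (Ts k)\<bar>"
    proof (rule has_vector_derivative_Lipschitz_bound[OF convex_box(1)[of 0 "min (Ts i) (Ts k)", unfolded cbox_interval]])
      show "(zs k has_vector_derivative A t *v zs k t + F t (zs k (max 0 (t - hs k)))) (at t within ?S)"
        if "t \<in> ?S" for t
        using that by (intro has_vector_derivative_within_subset[OF zs_deriv]) auto
    qed (use x y Ts_nonneg[of k] deriv_bound in auto)
    also have "\<dots> \<le> L * \<bar>x - y\<bar>"
      using order_trans[OF norm_ge_zero deriv_bound[of 0]] Ts_nonneg[of i] Ts_nonneg[of k]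
      by (intro mult_left_mono) auto
    finally show ?thesis
      unfolding zs_ext_def .
  qed
  then show ?thesis
    using that by blast
qed

definition converges_on :: "nat \<Rightarrow> (nat \<Rightarrow> nat) \<Rightarrow> bool" where
  "converges_on i r \<longleftrightarrow> (\<exists>g. uniform_limit {0..Ts i} (\<lambda>n. zs_ext (r n)) g sequentially)"

lemma converges_on_subsequence: "\<exists>k. strict_mono (k :: nat \<Rightarrow> nat) \<and> converges_on i (r \<circ> k)"
proof -
  obtain D where D: "\<And>k t. 0 \<le> t \<Longrightarrow> norm (zs_ext k t) \<le> D"
    using zs_ext_norm_bound by blast
  obtain L where L: "\<And>k x y. x \<in> {0..Ts i} \<Longrightarrow> y \<in> {0..Ts i} \<Longrightarrow> norm (zs_ext k x - zs_ext k y) \<le> L * \<bar>x - y\<bar>"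
    using zs_ext_Lipschitz by blast
  obtain g k where "strict_mono (k :: nat \<Rightarrow> nat)"
    and conv: "\<And>e. 0 < e \<Longrightarrow> \<exists>M. \<forall>n x. n \<ge> M \<and> x \<in> {0..Ts i} \<longrightarrow> norm (zs_ext (r (k n)) x - g x) < e"
  proof (rule Arzela_Ascoli[of "{0..Ts i}" "\<lambda>n. zs_ext (r n)" D])
    show "\<exists>d>0. \<forall>n y. y \<in> {0..Ts i} \<and> norm (x - y) < d \<longrightarrow> norm (zs_ext (r n) x - zs_ext (r n) y) < e"
      if x: "x \<in> {0..Ts i}" and e: "0 < e" for x e
    proof (intro exI[of _ "e / (\<bar>L\<bar> + 1)"] conjI allI impI)
      fix n y assume y: "y \<in> {0..Ts i} \<and> norm (x - y) < e / (\<bar>L\<bar> + 1)"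
      have "norm (zs_ext (r n) x - zs_ext (r n) y) \<le> L * \<bar>x - y\<bar>"
        using L[of x y "r n"] x y by blast
      also have "\<dots> \<le> (\<bar>L\<bar> + 1) * \<bar>x - y\<bar>"
        by (intro mult_right_mono) auto
      also have "\<dots> < e"
        using y by (simp add: field_simps)
      finally show "norm (zs_ext (r n) x - zs_ext (r n) y) < e" .
    qed (use e in simp)
  qed (use D in auto)
  moreover have "uniform_limit {0..Ts i} (\<lambda>n. zs_ext ((r \<circ> k) n)) g sequentially"
    unfolding uniform_limit_sequentially_iff dist_norm
  proof (intro allI impI)
    fix e :: real assume "e > 0"
    then obtain M where "\<forall>n x. n \<ge> M \<and> x \<in> {0..Ts i} \<longrightarrow> norm (zs_ext (r (k n)) x - g x) < e"
      using conv by blast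
    then show "\<exists>M. \<forall>n\<ge>M. \<forall>x\<in>{0..Ts i}. norm (zs_ext ((r \<circ> k) n) x - g x) < e"
      by (intro exI[of _ M]) auto
  qed
  ultimately show ?thesis
    unfolding converges_on_def by blast
qed

lemma converges_on_tail:
  assumes "converges_on i (r \<circ> k1)" "\<And>j. M \<le> j \<Longrightarrow> \<exists>j'. j \<le> j' \<and> k2 j = k1 j'"
  shows "converges_on i (r \<circ> k2)"
proof -
  obtain g where g: "\<And>e. e > 0 \<Longrightarrow> \<exists>M'. \<forall>n\<ge>M'. \<forall>x\<in>{0..Ts i}. dist (zs_ext (r (k1 n)) x) (g x) < e"
    using assms(1) unfolding converges_on_def uniform_limit_sequentially_iff by auto
  have "\<exists>M'. \<forall>n\<ge>M'. \<forall>x\<in>{0..Ts i}. dist (zs_ext (r (k2 n)) x) (g x) < e" if e: "e > 0" for e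
  proof -
    obtain M' where M': "\<forall>n\<ge>M'. \<forall>x\<in>{0..Ts i}. dist (zs_ext (r (k1 n)) x) (g x) < e"
      using g[OF e] by blast
    have "dist (zs_ext (r (k2 n)) x) (g x) < e" if n: "n \<ge> max M M'" and x: "x \<in> {0..Ts i}" for n x
    proof -
      obtain j' where "n \<le> j'" "k2 n = k1 j'"
        using assms(2)[of n] n by auto
      then show ?thesis
        using M' n x by auto
    qed
    then show ?thesis
      by blast
  qed
  then show ?thesis
    unfolding converges_on_def uniform_limit_sequentially_iff by auto
qed

lemma diagonal_subsequence: obtains kk where "strict_mono kk" "\<And>i. converges_on i kk"
proof -
  obtain k where "strict_mono k" "\<And>i. converges_on i (id \<circ> k)"
    using subsequence_diagonalization_lemma[of converges_on id] converges_on_subsequence converges_on_tail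
    by blast
  then show ?thesis
    using that by simp
qed

end

locale tonelli_limit = tonelli_approximations nrm A T P N lam F \<tau> B Ts hs zs
  for nrm :: "real^'n \<Rightarrow> real" and A T P N lam F \<tau> B Ts hs zs +
  fixes kk :: "nat \<Rightarrow> nat"
  assumes kk_strict_mono: "strict_mono kk" and kk_converges: "\<And>i. converges_on i kk"
begin

definition zlim :: "real \<Rightarrow> real^'n" where
  "zlim t = lim (\<lambda>n. zs_ext (kk n) t)"

lemma uniform_limit_zlim: "uniform_limit {0..Ts i} (\<lambda>n. zs_ext (kk n)) zlim sequentially"
proof -
  obtain g where g: "uniform_limit {0..Ts i} (\<lambda>n. zs_ext (kk n)) g sequentially"
    using kk_converges[of i] unfolding converges_on_def by blast
  have "zlim x = g x" if "x \<in> {0..Ts i}" for x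
    unfolding zlim_def using tendsto_uniform_limitI[OF g that] by (rule limI)
  then have "uniform_limit {0..Ts i} (\<lambda>n. zs_ext (kk n)) zlim sequentially
      \<longleftrightarrow> uniform_limit {0..Ts i} (\<lambda>n. zs_ext (kk n)) g sequentially"
    by (intro uniform_limit_cong') simp_all
  with g show ?thesis
    by simp
qed

lemma tendsto_zlim: "x \<in> {0..Ts i} \<Longrightarrow> (\<lambda>n. zs_ext (kk n) x) \<longlonglongrightarrow> zlim x"
  by (rule tendsto_uniform_limitI[OF uniform_limit_zlim])

lemma continuous_on_zlim_Icc: "continuous_on {0..Ts i} zlim"
  by (rule uniform_limit_theorem[OF always_eventually uniform_limit_zlim])
    (auto intro: continuous_on_subset[OF continuous_on_zs_ext])

lemma zlim_bound:
  assumes t: "t \<in> Ivl \<tau>"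
  shows "nrm (zlim t) \<le> 2 * N * B / lam"
proof -
  obtain i where "t \<le> Ts i"
    using Ts_exhaust[OF t] by blast
  then have "(\<lambda>n. zs_ext (kk n) t) \<longlonglongrightarrow> zlim t"
    using Ivl_nonneg[OF t] by (intro tendsto_zlim) auto
  moreover have "isCont nrm (zlim t)"
    using continuous_on_nrm[of UNIV] by (simp add: continuous_on_eq_continuous_at)
  ultimately have "(\<lambda>n. nrm (zs_ext (kk n) t)) \<longlonglongrightarrow> nrm (zlim t)"
    by (rule isCont_tendsto_compose[rotated])
  then show ?thesis
    by (rule tendsto_upperbound) (use Ivl_nonneg[OF t] zs_ext_bound in auto)
qed

text \<open>Along the subsequence the delays vanish, so the delayed integral equations pass to the limit
  by dominated convergence.\<close>

lemma zlim_eq: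
  assumes t: "t \<in> {0..Ts i}"
  shows "zlim t = Phi t *v (zlim 0 + integral {0..t} (\<lambda>s. Psi s *v F s (zlim s)))"
proof -
  have sub: "{0..t} \<subseteq> {0..Ts i}"
    using t by auto
  obtain M where M: "\<And>s x. s \<in> {0..Ts i} \<Longrightarrow> norm (Psi s *v F s x) \<le> M"
    using delayed_integrand_bound[OF Ts_in] by blast
  define fs where "fs n s = Psi s *v F s (zs_ext (kk n) (max 0 (s - hs (kk n))))" for n s
  have lim_int: "(\<lambda>n. integral {0..t} (fs n)) \<longlonglongrightarrow> integral {0..t} (\<lambda>s. Psi s *v F s (zlim s))"
  proof (rule dominated_convergence(2))
    show "fs n integrable_on {0..t}" for n
      unfolding fs_def
      by (intro integrable_continuous_interval continuous_on_subset[OF _ sub] continuous_on_delayed_integrand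
          Ts_in hs_pos continuous_on_subset[OF continuous_on_zs_ext]) auto
    show "(\<lambda>s. M) integrable_on {0..t}"
      by (rule integrable_continuous_interval[OF continuous_on_const])
    show "norm (fs n s) \<le> M" if "s \<in> {0..t}" for n s
      unfolding fs_def using M that sub by blast
    show "(\<lambda>n. fs n s) \<longlonglongrightarrow> Psi s *v F s (zlim s)" if s: "s \<in> {0..t}" for s
    proof -
      have "(\<lambda>n. max 0 (s - hs (kk n))) \<longlonglongrightarrow> max 0 (s - 0)"
        using LIMSEQ_subseq_LIMSEQ[OF hs_lim kk_strict_mono] by (intro tendsto_intros) (simp add: o_def)
      moreover have "s - hs (kk n) \<le> Ts i" for n
        using s sub hs_pos[of "kk n"] by auto
      ultimately have "(\<lambda>n. zs_ext (kk n) (max 0 (s - hs (kk n)))) \<longlonglongrightarrow> zlim s"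
        using s sub
        by (intro uniform_limit_tendsto_compose[OF uniform_limit_zlim[of i] continuous_on_zlim_Icc[of i]]) auto
      moreover have "s \<in> Ivl \<tau>"
        using s sub Icc_subset_Ivl[OF Ts_in[of i]] by auto
      ultimately show ?thesis
        unfolding fs_def by (intro tendsto_matrix_vector_mult[OF tendsto_const] isCont_tendsto_compose[OF isCont_F])
    qed
  qed
  have "(\<lambda>n. Phi t *v (zs_ext (kk n) 0 + integral {0..t} (fs n)))
      \<longlonglongrightarrow> Phi t *v (zlim 0 + integral {0..t} (\<lambda>s. Psi s *v F s (zlim s)))"
    using tendsto_zlim[of 0 i] Ts_nonneg[of i]
    by (intro tendsto_matrix_vector_mult[OF tendsto_const] tendsto_add lim_int) auto
  moreover have "\<forall>\<^sub>F n in sequentially. Phi t *v (zs_ext (kk n) 0 + integral {0..t} (fs n)) = zs_ext (kk n) t"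
    unfolding eventually_sequentially
  proof (intro exI[of _ i] allI impI)
    fix n assume "i \<le> n"
    then have "i \<le> kk n"
      using seq_suble[OF kk_strict_mono, of n] by linarith
    then have "Ts i \<le> Ts (kk n)"
      by (rule monoD[OF Ts_mono])
    then have sub_n: "{0..t} \<subseteq> {0..Ts (kk n)}"
      using t by auto
    have "fs n s = Psi s *v F s (zs (kk n) (max 0 (s - hs (kk n))))" if "s \<in> {0..t}" for s
      using that sub_n hs_pos[of "kk n"] unfolding fs_def by (subst zs_ext_eq) auto
    then have "integral {0..t} (fs n) = integral {0..t} (\<lambda>s. Psi s *v F s (zs (kk n) (max 0 (s - hs (kk n)))))"
      by (rule integral_cong)
    moreover have "zs_ext (kk n) 0 = zs (kk n) 0"
      using sub_n t by (intro zs_ext_eq) auto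
    ultimately have "Phi t *v (zs_ext (kk n) 0 + integral {0..t} (fs n)) = Phi t *v (zs (kk n) 0
        + integral {0..t} (\<lambda>s. Psi s *v F s (zs (kk n) (max 0 (s - hs (kk n))))))"
      by (simp only:)
    also have "\<dots> = zs (kk n) t"
      using sub_n t by (intro zs_eq[symmetric]) auto
    also have "\<dots> = zs_ext (kk n) t"
      using sub_n t by (intro zs_ext_eq[symmetric]) auto
    finally show "Phi t *v (zs_ext (kk n) 0 + integral {0..t} (fs n)) = zs_ext (kk n) t" .
  qed
  ultimately have "(\<lambda>n. zs_ext (kk n) t) \<longlonglongrightarrow> Phi t *v (zlim 0 + integral {0..t} (\<lambda>s. Psi s *v F s (zlim s)))"
    by (rule Lim_transform_eventually)
  then show ?thesis
    using tendsto_zlim[OF t] LIMSEQ_unique by blast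
qed

lemma zlim_deriv:
  assumes t: "t \<in> Ivl \<tau>"
  shows "(zlim has_vector_derivative A t *v zlim t + F t (zlim t)) (at t within Ivl \<tau>)"
proof -
  obtain b where b: "b \<in> Ivl \<tau>" "t \<le> b" and at: "at t within Ivl \<tau> = at t within {0..b}"
    using at_within_Ivl[OF t] by blast
  obtain i where i: "b \<le> Ts i"
    using Ts_exhaust[OF b(1)] by blast
  have sub: "{0..b} \<subseteq> {0..Ts i}"
    using i by auto
  have tb: "t \<in> {0..b}"
    using t b Ivl_nonneg by auto
  have cF: "continuous_on {0..b} (\<lambda>s. F s (zlim s))"
    using Icc_subset_Ivl[OF b(1)]
    by (intro continuous_on_F_comp continuous_on_id continuous_on_subset[OF continuous_on_zlim_Icc sub]) auto
  have eq: "zlim x = Phi x *v (zlim 0 + integral {0..x} (\<lambda>s. Psi s *v F s (zlim s)))" if "x \<in> {0..b}" for x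
    using zlim_eq that sub by blast
  have "(zlim has_vector_derivative A t *v zlim t + F t (zlim t)) (at t within {0..b})"
  proof (rule has_vector_derivative_transform[OF tb eq])
    show "((\<lambda>x. Phi x *v (zlim 0 + integral {0..x} (\<lambda>s. Psi s *v F s (zlim s))))
        has_vector_derivative A t *v zlim t + F t (zlim t)) (at t within {0..b})"
      using variation_of_constants[OF Ivl_nonneg[OF b(1)] cF tb, of "zlim 0"] unfolding eq[OF tb, symmetric] .
  qed
  then show ?thesis
    by (simp add: at)
qed

lemma continuous_on_zlim: "continuous_on (Ivl \<tau>) zlim"
  unfolding continuous_on_eq_continuous_within
  using zlim_deriv has_vector_derivative_continuous by blast

end

context bounded_forcing
begin

theorem bounded_solution_exists:
  obtains z where "\<And>t. t \<in> Ivl \<tau> \<Longrightarrow> (z has_vector_derivative A t *v z t + F t (z t)) (at t within Ivl \<tau>)"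
    "continuous_on (Ivl \<tau>) z" "\<And>t. t \<in> Ivl \<tau> \<Longrightarrow> nrm (z t) \<le> 2 * N * B / lam"
proof -
  obtain Ts :: "nat \<Rightarrow> real" where Ts: "\<And>k. Ts k \<in> Ivl \<tau>" "mono Ts" "\<And>t. t \<in> Ivl \<tau> \<Longrightarrow> \<exists>k. t \<le> Ts k"
    using Ivl_exhaustion[OF tau_pos] by blast
  define hs where "hs = (\<lambda>k. inverse (real (Suc k)))"
  have hs: "hs k > 0" for k
    by (simp add: hs_def)
  have hs_lim: "hs \<longlonglongrightarrow> 0"
    unfolding hs_def by (rule LIMSEQ_inverse_real_of_nat)
  have "\<exists>z. delayed_solution (hs k) (Ts k) z \<and> (\<forall>t\<in>{0..Ts k}. nrm (z t) \<le> 2 * N * B / lam)" for k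
    by (rule bounded_delayed_solution_exists[OF Ts(1) hs]) blast
  then obtain zs where zs: "\<forall>k. delayed_solution (hs k) (Ts k) (zs k) \<and>
      (\<forall>t\<in>{0..Ts k}. nrm (zs k t) \<le> 2 * N * B / lam)"
    using choice[of "\<lambda>k z. delayed_solution (hs k) (Ts k) z \<and> (\<forall>t\<in>{0..Ts k}. nrm (z t) \<le> 2 * N * B / lam)"]
    by blast
  have "tonelli_approximations nrm A T P N lam F \<tau> B Ts hs zs"
  proof (intro tonelli_approximations.intro tonelli_approximations_axioms.intro)
    show "bounded_forcing nrm A T P N lam F \<tau> B"
      by (rule bounded_forcing_axioms)
  qed (use Ts hs hs_lim zs in auto)
  then interpret approx: tonelli_approximations nrm A T P N lam F \<tau> B Ts hs zs .
  obtain kk where "strict_mono kk" "\<And>i. approx.converges_on i kk"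
    using approx.diagonal_subsequence by blast
  interpret lim: tonelli_limit nrm A T P N lam F \<tau> B Ts hs zs kk
    by (intro tonelli_limit.intro tonelli_limit_axioms.intro approx.tonelli_approximations_axioms) fact+
  show ?thesis
    using lim.zlim_deriv lim.continuous_on_zlim lim.zlim_bound by (rule that)
qed

end

section \<open>Shadowing pseudosolutions\<close>

lemma continuous_on_linear_plus:
  fixes A :: "real \<Rightarrow> real^'n^'n"
  assumes A: "continuous_on {0..} A" and f: "continuous_on ({0..} \<times> UNIV) (\<lambda>(t, x). f t x)"
  shows "continuous_on ({0..} \<times> UNIV) (\<lambda>(t, x). A t *v x + f t x)"
proof -
  have "continuous_on ({0..} \<times> UNIV) (\<lambda>p. A (fst p))"
    by (rule continuous_on_compose2[OF A continuous_on_fst]) auto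
  then have "continuous_on ({0..} \<times> UNIV) (\<lambda>p. A (fst p) *v snd p)"
    by (rule continuous_on_matrix_vector_mult[OF _ continuous_on_snd[OF continuous_on_id]])
  from continuous_on_add[OF this f] show ?thesis
    by (simp add: case_prod_beta)
qed

lemma continuous_on_err_fun:
  assumes nrm: "is_norm nrm" and y: "pseudosolution nrm g \<tau> y"
    and g: "continuous_on (Ivl \<tau> \<times> UNIV) (\<lambda>(t, x). g t x)"
  shows "continuous_on (Ivl \<tau>) (err_fun nrm g \<tau> y)"
proof -
  interpret vector_norm nrm
    by (rule vector_norm.intro[OF nrm])
  have y': "continuous_on (Ivl \<tau>) (\<lambda>t. vector_derivative y (at t within Ivl \<tau>))"
    and dy: "\<And>t. t \<in> Ivl \<tau> \<Longrightarrow> y differentiable (at t within Ivl \<tau>)"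
    using y unfolding pseudosolution_def by auto
  have "continuous_on (Ivl \<tau>) y"
    using dy differentiable_imp_continuous_within by (auto simp: continuous_on_eq_continuous_within)
  then have "continuous_on (Ivl \<tau>) (\<lambda>t. g t (y t))"
    using continuous_on_compose2[OF g continuous_on_Pair[OF continuous_on_id]] by fastforce
  with y' have "continuous_on (Ivl \<tau>) (\<lambda>t. vector_derivative y (at t within Ivl \<tau>) - g t (y t))"
    by (rule continuous_on_diff)
  from continuous_on_compose2[OF continuous_on_nrm[of UNIV] this] show ?thesis
    unfolding err_fun_def[abs_def] by simp
qed

lemma err_fun_le_sigma:
  "pseudosolution nrm g \<tau> y \<Longrightarrow> t \<in> Ivl \<tau> \<Longrightarrow> err_fun nrm g \<tau> y t \<le> sigma nrm g \<tau> y"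
  unfolding pseudosolution_def sigma_def by (auto intro: cSUP_upper)

lemma pseudosolution_with_error:
  assumes nrm: "is_norm nrm" and u: "nrm u = 1"
    and e: "\<And>t. t \<in> Ivl \<tau> \<Longrightarrow> 0 \<le> e t" "bdd_above (e ` Ivl \<tau>)"
    and z': "\<And>t. t \<in> Ivl \<tau> \<Longrightarrow> (z has_vector_derivative g t (z t) + e t *\<^sub>R u) (at t within Ivl \<tau>)"
    and cont: "continuous_on (Ivl \<tau>) (\<lambda>t. g t (z t) + e t *\<^sub>R u)"
  shows "pseudosolution nrm g \<tau> z" "\<And>t. t \<in> Ivl \<tau> \<Longrightarrow> err_fun nrm g \<tau> z t = e t"
proof -
  interpret vector_norm nrm
    by (rule vector_norm.intro[OF nrm])
  have vd: "vector_derivative z (at t within Ivl \<tau>) = g t (z t) + e t *\<^sub>R u" if "t \<in> Ivl \<tau>" for t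
    by (rule vector_derivative_within[OF at_within_Ivl_nontrivial[OF that] z'[OF that]])
  show err: "err_fun nrm g \<tau> z t = e t" if "t \<in> Ivl \<tau>" for t
    using e(1)[OF that] u unfolding err_fun_def vd[OF that] by (simp add: nrm_scaleR)
  show "pseudosolution nrm g \<tau> z"
    unfolding pseudosolution_def
  proof (intro conjI ballI)
    show "z differentiable (at t within Ivl \<tau>)" if "t \<in> Ivl \<tau>" for t
      using z'[OF that] by (rule differentiableI_vector)
    show "continuous_on (Ivl \<tau>) (\<lambda>t. vector_derivative z (at t within Ivl \<tau>))"
      using cont by (rule continuous_on_eq) (simp add: vd)
    have "err_fun nrm g \<tau> z ` Ivl \<tau> = e ` Ivl \<tau>"
      by (rule image_cong) (simp_all add: err)
    then show "bdd_above (err_fun nrm g \<tau> z ` Ivl \<tau>)"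
      using e(2) by simp
  qed
qed

text \<open>Truncating \<open>f\<close> radially outside the ball of radius \<open>\<rho>\<close> makes the forcing bounded by
  \<open>L \<rho> + \<epsilon>\<close>, and the bounded solution then stays in the ball, where the truncation is inactive.\<close>

lemma (in exp_dichotomy_setting) small_solution_exists:
  assumes \<rho>: "\<rho> > 0" and L: "0 \<le> L" and \<tau>: "\<tau> > 0"
    and f: "continuous_on ({0..} \<times> UNIV) (\<lambda>(t, x). f t x)"
    and f_bound: "\<And>t x. 0 \<le> t \<Longrightarrow> nrm x \<le> \<rho> \<Longrightarrow> nrm (f t x) \<le> L * nrm x"
    and e: "continuous_on (Ivl \<tau>) e" "\<And>t. t \<in> Ivl \<tau> \<Longrightarrow> nrm (e t) \<le> \<epsilon>"
    and small: "2 * N * (L * \<rho> + \<epsilon>) / lam \<le> \<rho>"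
  obtains z where "\<And>t. t \<in> Ivl \<tau> \<Longrightarrow> (z has_vector_derivative A t *v z t + f t (z t) + e t) (at t within Ivl \<tau>)"
    "continuous_on (Ivl \<tau>) (\<lambda>t. A t *v z t + f t (z t) + e t)" "\<And>t. t \<in> Ivl \<tau> \<Longrightarrow> nrm (z t) \<le> \<rho>"
proof -
  obtain r where r: "continuous_on UNIV r" "\<And>x. nrm (r x) \<le> \<rho>" "\<And>x. nrm x \<le> \<rho> \<Longrightarrow> r x = x"
    using radial_retraction[OF \<rho>] by blast
  define F where "F t x = f t (r x) + e t" for t x
  have "bounded_forcing nrm A T P N lam F \<tau> (L * \<rho> + \<epsilon>)"
  proof (unfold_locales)
    show "\<tau> > 0"
      by (rule \<tau>)
    have "continuous_on (Ivl \<tau> \<times> UNIV) (\<lambda>p. f (fst p) (r (snd p)))"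
      using continuous_on_compose2[OF f, of "Ivl \<tau> \<times> UNIV" "\<lambda>p. (fst p, r (snd p))"] Ivl_nonneg
      by (fastforce intro!: continuous_intros continuous_on_compose2[OF r(1)])
    moreover have "continuous_on (Ivl \<tau> \<times> UNIV) (\<lambda>p. e (fst p))"
      by (rule continuous_on_compose2[OF e(1) continuous_on_fst]) auto
    ultimately show "continuous_on (Ivl \<tau> \<times> UNIV) (\<lambda>(t, x). F t x)"
      unfolding F_def case_prod_beta by (rule continuous_on_add)
    fix t x assume t: "t \<in> Ivl \<tau>"
    have "nrm (f t (r x)) \<le> L * \<rho>"
      using f_bound[OF Ivl_nonneg[OF t] r(2)] r(2)[of x] L by (meson mult_left_mono order_trans)
    then show "nrm (F t x) \<le> L * \<rho> + \<epsilon>"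
      unfolding F_def using nrm_triangle[of "f t (r x)" "e t"] e(2)[OF t] by linarith
  qed
  then interpret bounded_forcing nrm A T P N lam F \<tau> "L * \<rho> + \<epsilon>" .
  obtain z where z': "\<And>t. t \<in> Ivl \<tau> \<Longrightarrow> (z has_vector_derivative A t *v z t + F t (z t)) (at t within Ivl \<tau>)"
    and cz: "continuous_on (Ivl \<tau>) z" and bound: "\<And>t. t \<in> Ivl \<tau> \<Longrightarrow> nrm (z t) \<le> \<rho>"
    using bounded_solution_exists small by (metis order_trans)
  have Fz: "F t (z t) = f t (z t) + e t" if "t \<in> Ivl \<tau>" for t
    unfolding F_def using r(3)[OF bound[OF that]] by simp
  show ?thesis
  proof
    show "(z has_vector_derivative A t *v z t + f t (z t) + e t) (at t within Ivl \<tau>)" if "t \<in> Ivl \<tau>" for t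
      using z'[OF that] Fz[OF that] by (simp add: add.assoc)
    have "continuous_on (Ivl \<tau>) (\<lambda>t. A t *v z t + F t (z t))"
      using Ivl_nonneg by (intro continuous_intros continuous_on_subset[OF continuous_A] cz
          continuous_on_F_comp continuous_on_id) auto
    then show "continuous_on (Ivl \<tau>) (\<lambda>t. A t *v z t + f t (z t) + e t)"
      by (rule continuous_on_eq) (simp add: Fz add.assoc)
  qed (rule bound)
qed

theorem mainTheorem4:
  fixes nrm :: "real^'n \<Rightarrow> real"
    and A :: "real \<Rightarrow> real^'n^'n"
    and f :: "real \<Rightarrow> real^'n \<Rightarrow> real^'n"
    and P :: "real \<Rightarrow> real^'n^'n"
    and \<rho> N lam L :: real
  assumes "is_norm nrm"
    and "\<rho> > 0"
    and "continuous_on {0..} A"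
    and "continuous_on ({0..} \<times> UNIV) (\<lambda>(t, x). f t x)"
    and "exp_dichotomy nrm A P N lam"
    and "L > 0"
    and "\<forall>t\<ge>0. \<forall>x. nrm x \<le> \<rho> \<longrightarrow> nrm (f t x) \<le> L * nrm x"
    and "L < lam / (2 * N)"
  shows "\<exists>\<epsilon>>0. \<forall>\<tau>::ereal. \<forall>y. \<tau> > 0 \<and>
           pseudosolution nrm (\<lambda>t x. A t *v x + f t x) \<tau> y \<and>
           sigma nrm (\<lambda>t x. A t *v x + f t x) \<tau> y \<le> \<epsilon> \<longrightarrow>
           (\<exists>z. pseudosolution nrm (\<lambda>t x. A t *v x + f t x) \<tau> z \<and>
                (\<forall>t\<in>Ivl \<tau>. nrm (z t) \<le> \<rho>) \<and>
                (\<forall>t\<in>Ivl \<tau>. err_fun nrm (\<lambda>t x. A t *v x + f t x) \<tau> z t =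
                            err_fun nrm (\<lambda>t x. A t *v x + f t x) \<tau> y t))"
proof -
  obtain T where "exp_dichotomy_setting nrm A T P N lam"
    using exp_dichotomy_setting_exists[OF assms(1,3,5)] by blast
  then interpret exp_dichotomy_setting nrm A T P N lam .
  let ?g = "\<lambda>t x. A t *v x + f t x"
  define \<epsilon> where "\<epsilon> = \<rho> * (lam / (2 * N) - L)"
  have \<epsilon>: "\<epsilon> > 0" and small: "2 * N * (L * \<rho> + \<epsilon>) / lam \<le> \<rho>"
    using assms(2,8) N_pos lam_pos by (simp_all add: \<epsilon>_def field_simps)
  have g: "continuous_on (Ivl \<tau> \<times> UNIV) (\<lambda>(t, x). ?g t x)" for \<tau>
    using continuous_on_linear_plus[OF assms(3,4)] by (rule continuous_on_subset) (auto simp: Ivl_def)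
  obtain u where u: "nrm u = 1"
    using unit_vector_exists by blast
  show ?thesis
  proof (intro exI[of _ \<epsilon>] conjI \<epsilon> allI impI, elim conjE)
    fix \<tau> :: ereal and y assume \<tau>: "\<tau> > 0" and y: "pseudosolution nrm ?g \<tau> y" and "sigma nrm ?g \<tau> y \<le> \<epsilon>"
    then have e_le: "err_fun nrm ?g \<tau> y t \<le> \<epsilon>" if "t \<in> Ivl \<tau>" for t
      using err_fun_le_sigma[OF y that] by linarith
    have e_cont: "continuous_on (Ivl \<tau>) (\<lambda>t. err_fun nrm ?g \<tau> y t *\<^sub>R u)"
      by (intro continuous_intros continuous_on_err_fun[OF assms(1) y g])
    obtain z where z: "\<And>t. t \<in> Ivl \<tau> \<Longrightarrow> (z has_vector_derivative ?g t (z t) + err_fun nrm ?g \<tau> y t *\<^sub>R u) (at t within Ivl \<tau>)"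
      "continuous_on (Ivl \<tau>) (\<lambda>t. ?g t (z t) + err_fun nrm ?g \<tau> y t *\<^sub>R u)" "\<And>t. t \<in> Ivl \<tau> \<Longrightarrow> nrm (z t) \<le> \<rho>"
      using small_solution_exists[OF assms(2) _ \<tau> assms(4) _ e_cont _ small] assms(6,7) e_le u
      by (simp add: nrm_scaleR err_fun_def nrm_nonneg) blast
    have e_bdd: "bdd_above (err_fun nrm ?g \<tau> y ` Ivl \<tau>)"
      using e_le by (rule bdd_aboveI2)
    have e0: "0 \<le> err_fun nrm ?g \<tau> y t" if "t \<in> Ivl \<tau>" for t
      unfolding err_fun_def by (rule nrm_nonneg)
    note shadow = pseudosolution_with_error[where g = ?g, OF assms(1) u e0 e_bdd z(1,2)]
    then show "\<exists>z. pseudosolution nrm ?g \<tau> z \<and> (\<forall>t\<in>Ivl \<tau>. nrm (z t) \<le> \<rho>) \<and>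
        (\<forall>t\<in>Ivl \<tau>. err_fun nrm ?g \<tau> z t = err_fun nrm ?g \<tau> y t)"
      using z(3) by blast
  qed
qed

end
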